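(* Let $\mathbb K$ be a field with $2\in\mathbb K^\times$, $A$ a unital commutative associative $\mathbb K$-algebra, $\mathfrak k$ a $\mathbb K$-Lie algebra and $\mathfrak g=A\otimes\mathfrak k$. Then $$P(Z_2(\mathfrak g))=(\Lambda^2(A)\otimes S^2(\mathfrak k))\oplus(A\otimes Z_2(\mathfrak k))\oplus(I_A\otimes\Lambda^2(\mathfrak k)).$$
   Context: $\mathfrak g$ has bracket $[a\otimes x,a'\otimes x']=aa'\otimes[x,x']$, $ax=a\otimes x$, unit $\mathbf 1$. $v\wedge w=\tfrac12(v\otimes w-w\otimes v)$, $v\vee w=\tfrac12(v\otimes w+w\otimes v)$. For a Lie algebra $\mathfrak h$, $Z_2(\mathfrak h)$ is the kernel of $\Lambda^2(\mathfrak h)\to\mathfrak h$, $u\wedge v\mapsto[u,v]$. $I_A$ is the kernel of multiplication $S^2(A)\to A$. $P=(p_1,p_2,p_3)$ is the linear isomorphism $\Lambda^2(\mathfrak g)\to(\Lambda^2(A)\otimes S^2(\mathfrak k))\oplus(A\otimes\Lambda^2(\mathfrak k))\oplus(I_A\otimes\Lambda^2(\mathfrak k))$ with $p_1(ax\wedge by)=a\wedge b\otimes x\vee y$, $p_2(ax\wedge by)=ab\otimes x\wedge y$, $p_3(ax\wedge by)=(a\vee b-ab\vee\mathbf 1)\otimes x\wedge y$. *)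

theory Defs
  imports Complex_Main "HOL-Library.Function_Algebras"
begin

text \<open>
Tensor products of vector spaces over a field 'f are modelled by presentations:
a presented space is an index type 'i together with a set R of relations in the
free vector space of finitely supported functions 'i => 'f; the space itself is
the quotient (free space) / span R.  Subspaces are represented by their full
preimages in the free space (subspaces of the free space containing span R).
\<close>

definition free_space :: "('i \<Rightarrow> 'f::zero) set" where
  "free_space = {f. finite {i. f i \<noteq> 0}}"

definition delta :: "'i \<Rightarrow> 'i \<Rightarrow> 'f::zero_neq_one" where
  "delta i = (\<lambda>j. if j = i then 1 else 0)"

definition smul :: "'f::times \<Rightarrow> ('i \<Rightarrow> 'f) \<Rightarrow> ('i \<Rightarrow> 'f)" where
  "smul c f = (\<lambda>i. c * f i)"

definition lspan :: "('i \<Rightarrow> 'f::field) set \<Rightarrow> ('i \<Rightarrow> 'f) set" where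
  "lspan S = {v. \<exists>F c. finite F \<and> F \<subseteq> S \<and> v = (\<Sum>s\<in>F. smul (c s) s)}"

text \<open>relations presenting a vector space V (with scalar multiplication sc) as a quotient of
  the free space on V\<close>
definition lin_rel :: "('f::field \<Rightarrow> 'v::ab_group_add \<Rightarrow> 'v) \<Rightarrow> ('v \<Rightarrow> 'f) set" where
  "lin_rel sc = {delta (a + b) - delta a - delta b | a b. True}
              \<union> {delta (sc c a) - smul c (delta a) | c a. True}"

definition ptens :: "('i \<Rightarrow> 'f::times) \<Rightarrow> ('j \<Rightarrow> 'f) \<Rightarrow> ('i \<times> 'j \<Rightarrow> 'f)" where
  "ptens f g = (\<lambda>(i, j). f i * g j)"

definition tens_rel :: "('i \<Rightarrow> 'f::field) set \<Rightarrow> ('j \<Rightarrow> 'f) set \<Rightarrow> ('i \<times> 'j \<Rightarrow> 'f) set" where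
  "tens_rel R1 R2 = {ptens r (delta j) | r j. r \<in> R1} \<union> {ptens (delta i) r | i r. r \<in> R2}"

definition wedge :: "('i \<Rightarrow> 'f::field) \<Rightarrow> ('i \<Rightarrow> 'f) \<Rightarrow> ('i \<times> 'i \<Rightarrow> 'f)" where
  "wedge v w = smul (inverse 2) (ptens v w - ptens w v)"

definition vee :: "('i \<Rightarrow> 'f::field) \<Rightarrow> ('i \<Rightarrow> 'f) \<Rightarrow> ('i \<times> 'i \<Rightarrow> 'f)" where
  "vee v w = smul (inverse 2) (ptens v w + ptens w v)"

definition Lam2 :: "('i \<Rightarrow> 'f::field) set \<Rightarrow> ('i \<times> 'i \<Rightarrow> 'f) set" where
  "Lam2 R = lspan ({wedge v w | v w. v \<in> free_space \<and> w \<in> free_space} \<union> tens_rel R R)"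

definition Sym2 :: "('i \<Rightarrow> 'f::field) set \<Rightarrow> ('i \<times> 'i \<Rightarrow> 'f) set" where
  "Sym2 R = lspan ({vee v w | v w. v \<in> free_space \<and> w \<in> free_space} \<union> tens_rel R R)"

definition lext :: "('i \<Rightarrow> ('j \<Rightarrow> 'f::field)) \<Rightarrow> ('i \<Rightarrow> 'f) \<Rightarrow> ('j \<Rightarrow> 'f)" where
  "lext \<phi> t = (\<Sum>i\<in>{i. t i \<noteq> 0}. smul (t i) (\<phi> i))"

definition Z2 :: "('i \<Rightarrow> 'f::field) set \<Rightarrow> ('i \<times> 'i \<Rightarrow> ('i \<Rightarrow> 'f)) \<Rightarrow> ('i \<times> 'i \<Rightarrow> 'f) set" where
  "Z2 R brk = {t \<in> Lam2 R. lext brk t \<in> lspan R}"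

definition I_A :: "('f::field \<Rightarrow> 'a::ab_group_add \<Rightarrow> 'a) \<Rightarrow> ('a \<Rightarrow> 'a \<Rightarrow> 'a) \<Rightarrow> ('a \<times> 'a \<Rightarrow> 'f) set" where
  "I_A sA mA = {t \<in> Sym2 (lin_rel sA). lext (\<lambda>(a, b). delta (mA a b)) t \<in> lspan (lin_rel sA)}"

definition g_rel :: "('f::field \<Rightarrow> 'a::ab_group_add \<Rightarrow> 'a) \<Rightarrow> ('f \<Rightarrow> 'k::ab_group_add \<Rightarrow> 'k)
    \<Rightarrow> ('a \<times> 'k \<Rightarrow> 'f) set" where
  "g_rel sA sK = tens_rel (lin_rel sA) (lin_rel sK)"

definition g_br :: "('a \<Rightarrow> 'a \<Rightarrow> 'a) \<Rightarrow> ('k \<Rightarrow> 'k \<Rightarrow> 'k)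
    \<Rightarrow> ('a \<times> 'k) \<times> ('a \<times> 'k) \<Rightarrow> ('a \<times> 'k \<Rightarrow> 'f::field)" where
  "g_br mA brK = (\<lambda>((a, x), (b, y)). ptens (delta (mA a b)) (delta (brK x y)))"

text \<open>The components of P on generators ax (x) by (they agree with the paper's formulas on
  ax wedge by, the latter being half the antisymmetrisation)\<close>
definition p1 :: "('a \<times> 'k) \<times> ('a \<times> 'k) \<Rightarrow> (('a \<times> 'a) \<times> ('k \<times> 'k) \<Rightarrow> 'f::field)" where
  "p1 = (\<lambda>((a, x), (b, y)). ptens (wedge (delta a) (delta b)) (vee (delta x) (delta y)))"

definition p2 :: "('a \<Rightarrow> 'a \<Rightarrow> 'a) \<Rightarrow> ('a \<times> 'k) \<times> ('a \<times> 'k) \<Rightarrow> ('a \<times> ('k \<times> 'k) \<Rightarrow> 'f::field)" where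
  "p2 mA = (\<lambda>((a, x), (b, y)). ptens (delta (mA a b)) (wedge (delta x) (delta y)))"

definition p3 :: "('a \<Rightarrow> 'a \<Rightarrow> 'a) \<Rightarrow> 'a \<Rightarrow> ('a \<times> 'k) \<times> ('a \<times> 'k)
    \<Rightarrow> (('a \<times> 'a) \<times> ('k \<times> 'k) \<Rightarrow> 'f::field)" where
  "p3 mA oneA = (\<lambda>((a, x), (b, y)).
     ptens (vee (delta a) (delta b) - vee (delta (mA a b)) (delta oneA)) (wedge (delta x) (delta y)))"

end

(*
  On the generators ax /\ by of Lambda^2(g), p_1 and p_3 take the values (a /\ b) (x) (x \/ y)
  and (a \/ b - ab \/ 1) (x) (x /\ y), so they map all of Lambda^2(g) into the first and third
  summand.  For p_2 we expand in a basis (e_b) of A: the coordinate maps A (x) V -> V along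
  e_b carry the bracket of g to that of k, up to the relation [x, y] + [y, x] = 0, so every
  coordinate of p_2(t) lies in Z_2(k) when t lies in Z_2(g).

  Conversely, each generator of the three summands has an explicit preimage in Z_2(g):
  (ax /\ by + ay /\ bx) / 2 for (a /\ b) (x) (x \/ y), the sum of a x_j /\ 1 y_j for
  a (x) (sum of x_j /\ y_j), and the sum of (a_j x /\ b_j y - a_j y /\ b_j x) / 2 for
  (sum of a_j \/ b_j) (x) (x /\ y).  The bracket of the last one is m(i) (x) [x, y], which
  is a relation because i = sum of a_j \/ b_j lies in I_A, so that m(i) = 0 in A.
*)

theory Submission
  imports Defs
begin

lemma sum_fun_apply: "(\<Sum>i\<in>S. f i) x = (\<Sum>i\<in>S. (f i x :: 'b::comm_monoid_add))"
  by (induction S rule: infinite_finite_induct) auto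

lemma smul_apply: "smul c f i = c * f i"
  by (simp add: smul_def)

lemma ptens_apply: "ptens f g (i, j) = f i * g j"
  by (simp add: ptens_def)

lemmas fun_app_simps = plus_fun_apply zero_fun_apply minus_apply uminus_apply smul_apply ptens_apply
declare plus_fun_apply [simp del] zero_fun_apply [simp del] minus_apply [simp del] uminus_apply [simp del]

interpretation vs: vector_space "smul :: 'f::field \<Rightarrow> ('i \<Rightarrow> 'f) \<Rightarrow> ('i \<Rightarrow> 'f)"
  by unfold_locales (simp_all add: fun_eq_iff fun_app_simps algebra_simps)

lemma lspan_eq_span: "lspan S = vs.span S"
  by (auto simp: lspan_def vs.span_explicit)

lemmas lspan_superset = vs.span_base[folded lspan_eq_span]
  and lspan_minimal = vs.span_minimal[folded lspan_eq_span]
  and lspan_mono = vs.span_mono[folded lspan_eq_span]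
  and subspace_lspan = vs.subspace_span[folded lspan_eq_span]
  and lspan_0 = vs.span_zero[folded lspan_eq_span]
  and lspan_add = vs.span_add[folded lspan_eq_span]
  and lspan_smul = vs.span_scale[folded lspan_eq_span]
  and lspan_neg = vs.span_neg[folded lspan_eq_span]
  and lspan_diff = vs.span_diff[folded lspan_eq_span]
  and lspan_sum = vs.span_sum[folded lspan_eq_span]

lemma ptens_add_left: "ptens (f + f') (g :: _ \<Rightarrow> 'f::field) = ptens f g + ptens f' g"
  by (simp add: fun_eq_iff fun_app_simps algebra_simps)
lemma ptens_add_right: "ptens (f :: _ \<Rightarrow> 'f::field) (g + g') = ptens f g + ptens f g'"
  by (simp add: fun_eq_iff fun_app_simps algebra_simps)
lemma ptens_diff_left: "ptens (f - f') g = ptens f g - ptens f' (g :: _ \<Rightarrow> 'f::field)"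
  by (simp add: fun_eq_iff fun_app_simps algebra_simps)
lemma ptens_diff_right: "ptens f (g - g') = ptens f g - ptens f (g' :: _ \<Rightarrow> 'f::field)"
  by (simp add: fun_eq_iff fun_app_simps algebra_simps)
lemma ptens_minus_right: "ptens f (- g) = - ptens f (g :: _ \<Rightarrow> 'f::field)"
  by (simp add: fun_eq_iff fun_app_simps)
lemma ptens_smul_left: "ptens (smul c f) g = smul c (ptens f (g :: _ \<Rightarrow> 'f::field))"
  by (simp add: fun_eq_iff fun_app_simps)
lemma ptens_smul_right: "ptens f (smul c g) = smul c (ptens f (g :: _ \<Rightarrow> 'f::field))"
  by (simp add: fun_eq_iff fun_app_simps algebra_simps)
lemma ptens_0_left [simp]: "ptens 0 g = (0 :: _ \<Rightarrow> 'f::field)"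
  by (simp add: fun_eq_iff fun_app_simps)
lemma ptens_sum_left: "ptens (\<Sum>i\<in>S. f i) g = (\<Sum>i\<in>S. ptens (f i) (g :: _ \<Rightarrow> 'f::field))"
  by (induction S rule: infinite_finite_induct) (simp_all add: ptens_add_left)
lemma ptens_delta_delta: "ptens (delta i) (delta j) = (delta (i, j) :: _ \<Rightarrow> 'f::field)"
  by (simp add: fun_eq_iff fun_app_simps delta_def)

lemma wedge_commute: "wedge w v = - wedge v (w :: _ \<Rightarrow> 'f::field)"
  by (simp add: wedge_def fun_eq_iff fun_app_simps algebra_simps)
lemma vee_commute: "vee w v = vee v (w :: _ \<Rightarrow> 'f::field)"
  by (simp add: vee_def fun_eq_iff fun_app_simps algebra_simps)

lemma wedge_delta_delta:
  "wedge (delta i) (delta j) = smul (inverse 2) (delta (i, j) - (delta (j, i) :: _ \<Rightarrow> 'f::field))"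
  by (simp add: wedge_def ptens_delta_delta)
lemma vee_delta_delta:
  "vee (delta i) (delta j) = smul (inverse 2) (delta (i, j) + (delta (j, i) :: _ \<Rightarrow> 'f::field))"
  by (simp add: vee_def ptens_delta_delta)


lemma free_space_iff: "f \<in> free_space \<longleftrightarrow> finite {i. f i \<noteq> 0}"
  by (simp add: free_space_def)

lemma subspace_free_space: "vs.subspace (free_space :: ('i \<Rightarrow> 'f::field) set)"
proof (rule vs.subspaceI)
  fix x y :: "'i \<Rightarrow> 'f" and c :: 'f
  assume "x \<in> free_space" "y \<in> free_space"
  then show "x + y \<in> free_space"
    unfolding free_space_iff
    by (rule finite_subset[rotated, OF finite_UnI]) (auto simp: fun_app_simps)
  show "smul c x \<in> free_space" if "x \<in> free_space"
    using that unfolding free_space_iff by (rule finite_subset[rotated]) (auto simp: fun_app_simps)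
qed (simp add: free_space_iff fun_app_simps)

lemmas free_space_0 [simp] = vs.subspace_0[OF subspace_free_space]
  and free_space_add [simp] = vs.subspace_add[OF subspace_free_space]
  and free_space_smul [simp] = vs.subspace_scale[OF subspace_free_space]
  and free_space_diff [simp] = vs.subspace_diff[OF subspace_free_space]
  and free_space_sum = vs.subspace_sum[OF subspace_free_space]

lemma free_space_delta [simp]: "(delta i :: _ \<Rightarrow> 'f::field) \<in> free_space"
  by (simp add: free_space_iff delta_def)

lemma free_space_ptens [simp]:
  "f \<in> free_space \<Longrightarrow> g \<in> free_space \<Longrightarrow> ptens f g \<in> (free_space :: (_ \<Rightarrow> 'f::field) set)"
  unfolding free_space_iff
  by (rule finite_subset[of _ "{i. f i \<noteq> 0} \<times> {i. g i \<noteq> 0}"]) (auto simp: ptens_def)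

lemma free_space_wedge [simp]:
  "f \<in> free_space \<Longrightarrow> g \<in> free_space \<Longrightarrow> wedge f g \<in> (free_space :: (_ \<Rightarrow> 'f::field) set)"
  unfolding wedge_def by simp

lemma free_space_vee [simp]:
  "f \<in> free_space \<Longrightarrow> g \<in> free_space \<Longrightarrow> vee f g \<in> (free_space :: (_ \<Rightarrow> 'f::field) set)"
  unfolding vee_def by simp

lemma lspan_subset_free_space: "S \<subseteq> free_space \<Longrightarrow> lspan S \<subseteq> free_space"
  by (rule lspan_minimal[OF _ subspace_free_space])

lemma free_space_eq_sum_delta:
  assumes "u \<in> free_space"
  shows "u = (\<Sum>i\<in>{i. u i \<noteq> 0}. smul (u i) (delta i :: _ \<Rightarrow> 'f::field))"
proof
  fix j
  have fin: "finite {i. u i \<noteq> 0}"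
    using assms by (simp add: free_space_iff)
  have "(\<Sum>i\<in>{i. u i \<noteq> 0}. smul (u i) (delta i :: _ \<Rightarrow> 'f)) j = (\<Sum>i\<in>{i. u i \<noteq> 0}. u i * delta i j)"
    by (simp add: sum_fun_apply smul_apply)
  also have "\<dots> = (\<Sum>i\<in>{i. u i \<noteq> 0} \<inter> {j}. u i * delta i j)"
    by (rule sum.mono_neutral_right) (auto simp: fin delta_def)
  also have "\<dots> = u j"
    by (cases "u j = 0") (auto simp: delta_def)
  finally show "u j = (\<Sum>i\<in>{i. u i \<noteq> 0}. smul (u i) (delta i :: _ \<Rightarrow> 'f)) j"
    by simp
qed

lemma free_space_eq_lspan_delta: "(free_space :: ('i \<Rightarrow> 'f::field) set) = lspan (range delta)"
proof
  show "lspan (range delta) \<subseteq> (free_space :: ('i \<Rightarrow> 'f) set)"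
    by (rule lspan_subset_free_space) auto
  show "free_space \<subseteq> lspan (range (delta :: 'i \<Rightarrow> 'i \<Rightarrow> 'f))"
  proof
    fix u :: "'i \<Rightarrow> 'f"
    assume "u \<in> free_space"
    have "(\<Sum>i\<in>{i. u i \<noteq> 0}. smul (u i) (delta i)) \<in> lspan (range delta)"
      by (intro lspan_sum lspan_smul lspan_superset rangeI)
    with free_space_eq_sum_delta[OF \<open>u \<in> free_space\<close>] show "u \<in> lspan (range delta)"
      by simp
  qed
qed


section \<open>Linear maps and linear extension\<close>

text \<open>Linearity is only required on the free space: \<^const>\<open>lext\<close> vanishes on functions of
  infinite support and is therefore not additive on all functions.\<close>

definition flinear :: "(('i \<Rightarrow> 'f::field) \<Rightarrow> ('j \<Rightarrow> 'f)) \<Rightarrow> bool" where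
  "flinear f \<longleftrightarrow> (\<forall>x\<in>free_space. \<forall>y\<in>free_space. f (x + y) = f x + f y)
      \<and> (\<forall>c. \<forall>x\<in>free_space. f (smul c x) = smul c (f x))"

lemma flinearI:
  assumes "\<And>x y. x \<in> free_space \<Longrightarrow> y \<in> free_space \<Longrightarrow> f (x + y) = f x + f y"
    and "\<And>c x. x \<in> free_space \<Longrightarrow> f (smul c x) = smul c (f x)"
  shows "flinear f"
  using assms by (auto simp: flinear_def)

lemma flinear_add: "flinear f \<Longrightarrow> x \<in> free_space \<Longrightarrow> y \<in> free_space \<Longrightarrow> f (x + y) = f x + f y"
  by (simp add: flinear_def)

lemma flinear_smul: "flinear f \<Longrightarrow> x \<in> free_space \<Longrightarrow> f (smul c x) = smul c (f x)"
  by (simp add: flinear_def)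

lemma flinear_0: "flinear f \<Longrightarrow> f 0 = 0"
  using flinear_smul[of f 0 0] by simp

lemma flinear_diff:
  assumes "flinear f" "x \<in> free_space" "y \<in> free_space"
  shows "f (x - y) = f x - f y"
  using flinear_add[OF assms(1), of "x - y" y] assms by simp

lemma flinear_sum:
  assumes "flinear f" "\<And>i. i \<in> S \<Longrightarrow> g i \<in> free_space"
  shows "f (\<Sum>i\<in>S. g i) = (\<Sum>i\<in>S. f (g i))"
  using assms(2)
  by (induction S rule: infinite_finite_induct)
     (simp_all add: flinear_0[OF assms(1)] flinear_add[OF assms(1)] free_space_sum)

lemma flinear_lspan_into:
  assumes f: "flinear f" and S: "S \<subseteq> free_space" and V: "vs.subspace V"
    and fS: "\<And>s. s \<in> S \<Longrightarrow> f s \<in> V" and x: "x \<in> lspan S"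
  shows "f x \<in> V"
proof -
  have "x \<in> free_space \<and> f x \<in> V"
    using x unfolding lspan_eq_span
  proof (induction rule: vs.span_induct_alt)
    case base
    show ?case
      using flinear_0[OF f] vs.subspace_0[OF V] by simp
  next
    case (step c s y)
    with S have "s \<in> free_space" by blast
    with step show ?case
      by (simp add: flinear_add[OF f] flinear_smul[OF f] fS vs.subspace_add[OF V] vs.subspace_scale[OF V])
  qed
  then show ?thesis ..
qed

lemma flinear_eq_on_delta:
  assumes f: "flinear f" and g: "flinear g" and fg: "\<And>i. f (delta i) = g (delta i)"
    and u: "u \<in> free_space"
  shows "f u = g u"
proof -
  have "f u = (\<Sum>i\<in>{i. u i \<noteq> 0}. f (smul (u i) (delta i)))"
    by (subst free_space_eq_sum_delta[OF u]) (simp add: flinear_sum[OF f])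
  also have "\<dots> = (\<Sum>i\<in>{i. u i \<noteq> 0}. g (smul (u i) (delta i)))"
    by (simp add: flinear_smul[OF f] flinear_smul[OF g] fg)
  also have "\<dots> = g u"
    by (subst (2) free_space_eq_sum_delta[OF u]) (simp add: flinear_sum[OF g])
  finally show ?thesis .
qed

lemma flinear_id: "flinear (\<lambda>x. x)"
  by (rule flinearI) auto

lemma flinear_compose:
  assumes "flinear f" "flinear g" "\<And>x. x \<in> free_space \<Longrightarrow> g x \<in> free_space"
  shows "flinear (\<lambda>x. f (g x))"
  using assms by (intro flinearI) (auto simp: flinear_add flinear_smul)

lemma flinear_diff_fun: "flinear f \<Longrightarrow> flinear g \<Longrightarrow> flinear (\<lambda>x. f x - g x)"
  by (intro flinearI) (auto simp: flinear_add flinear_smul vs.scale_right_diff_distrib)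

lemma flinear_sum_fun: "(\<And>b. b \<in> F \<Longrightarrow> flinear (f b)) \<Longrightarrow> flinear (\<lambda>x. \<Sum>b\<in>F. f b x)"
  by (intro flinearI)
     (auto simp: flinear_add flinear_smul vs.scale_sum_right sum.distrib intro!: sum.cong)

lemma flinear_smul_const: "flinear (\<lambda>x. smul c (x :: _ \<Rightarrow> 'f::field))"
  by (intro flinearI) (auto simp: vs.scale_right_distrib mult.commute)

lemma flinear_ptens_left: "flinear (\<lambda>x. ptens x (g :: _ \<Rightarrow> 'f::field))"
  by (intro flinearI) (auto simp: ptens_add_left ptens_smul_left)
lemma flinear_ptens_right: "flinear (\<lambda>x. ptens (g :: _ \<Rightarrow> 'f::field) x)"
  by (intro flinearI) (auto simp: ptens_add_right ptens_smul_right)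
lemma flinear_wedge_left: "flinear (\<lambda>x. wedge x (g :: _ \<Rightarrow> 'f::field))"
  by (intro flinearI)
     (auto simp: wedge_def fun_eq_iff fun_app_simps algebra_simps add_divide_distrib diff_divide_distrib)
lemma flinear_wedge_right: "flinear (\<lambda>x. wedge (g :: _ \<Rightarrow> 'f::field) x)"
  by (intro flinearI)
     (auto simp: wedge_def fun_eq_iff fun_app_simps algebra_simps add_divide_distrib diff_divide_distrib)
lemma flinear_vee_left: "flinear (\<lambda>x. vee x (g :: _ \<Rightarrow> 'f::field))"
  by (intro flinearI) (auto simp: vee_def fun_eq_iff fun_app_simps algebra_simps add_divide_distrib)
lemma flinear_vee_right: "flinear (\<lambda>x. vee (g :: _ \<Rightarrow> 'f::field) x)"
  by (intro flinearI) (auto simp: vee_def fun_eq_iff fun_app_simps algebra_simps add_divide_distrib)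

lemma lext_eq_sum_superset:
  assumes "finite S" "{i. t i \<noteq> 0} \<subseteq> S"
  shows "lext \<phi> t = (\<Sum>i\<in>S. smul (t i) (\<phi> i :: _ \<Rightarrow> 'f::field))"
  unfolding lext_def by (rule sum.mono_neutral_left) (use assms in auto)

lemma flinear_lext: "flinear (lext (\<phi> :: 'i \<Rightarrow> ('j \<Rightarrow> 'f::field)))"
proof (rule flinearI)
  fix x y :: "'i \<Rightarrow> 'f"
  assume "x \<in> free_space" "y \<in> free_space"
  then have fin: "finite ({i. x i \<noteq> 0} \<union> {i. y i \<noteq> 0})"
    by (simp add: free_space_iff)
  show "lext \<phi> (x + y) = lext \<phi> x + lext \<phi> y"
    by (subst (1 2 3) lext_eq_sum_superset[OF fin])
       (auto simp: fun_app_simps vs.scale_left_distrib sum.distrib)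
next
  fix c :: 'f and x :: "'i \<Rightarrow> 'f"
  assume "x \<in> free_space"
  then have fin: "finite {i. x i \<noteq> 0}"
    by (simp add: free_space_iff)
  show "lext \<phi> (smul c x) = smul c (lext \<phi> x)"
    by (subst (1 2) lext_eq_sum_superset[OF fin]) (auto simp: smul_apply vs.scale_sum_right)
qed

lemmas lext_add = flinear_add[OF flinear_lext]
  and lext_smul = flinear_smul[OF flinear_lext]
  and lext_diff = flinear_diff[OF flinear_lext]
  and lext_0 = flinear_0[OF flinear_lext]

lemma lext_delta [simp]: "lext \<phi> (delta i) = (\<phi> i :: _ \<Rightarrow> 'f::field)"
  by (subst lext_eq_sum_superset[of "{i}"]) (auto simp: delta_def)

lemma lext_in_subspace:
  assumes "vs.subspace V" "\<And>i. t i \<noteq> 0 \<Longrightarrow> \<phi> i \<in> V"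
  shows "lext \<phi> t \<in> V"
  unfolding lext_def using assms by (intro vs.subspace_sum vs.subspace_scale) auto

lemma free_space_lext [simp]:
  "(\<And>i. \<phi> i \<in> free_space) \<Longrightarrow> lext \<phi> t \<in> (free_space :: (_ \<Rightarrow> 'f::field) set)"
  by (rule lext_in_subspace[OF subspace_free_space]) auto

lemma lext_diff_fun: "lext (\<lambda>i. \<phi> i - \<psi> i) t = lext \<phi> t - lext \<psi> (t :: _ \<Rightarrow> 'f::field)"
  unfolding lext_def by (simp add: vs.scale_right_diff_distrib sum_subtractf)

lemma lext_compose_flinear:
  assumes "flinear L" "\<And>i. \<phi> i \<in> free_space"
  shows "L (lext \<phi> t) = lext (\<lambda>i. L (\<phi> i)) (t :: _ \<Rightarrow> 'f::field)"
proof (cases "finite {i. t i \<noteq> 0}")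
  case True
  then show ?thesis
    using assms unfolding lext_def by (simp add: flinear_sum flinear_smul)
next
  case False
  then show ?thesis
    using flinear_0[OF assms(1)] by (simp add: lext_def)
qed

lemma lext_case_prod_compose_flinear:
  assumes "flinear L" "\<And>x y. \<psi> x y \<in> free_space"
  shows "L (lext (\<lambda>(x, y). \<psi> x y) t) = lext (\<lambda>(x, y). L (\<psi> x y)) (t :: _ \<Rightarrow> 'f::field)"
proof -
  have "L (lext (\<lambda>(x, y). \<psi> x y) t) = lext (\<lambda>i. L (case i of (x, y) \<Rightarrow> \<psi> x y)) t"
    by (rule lext_compose_flinear) (simp_all add: assms split: prod.split)
  also have "(\<lambda>i. L (case i of (x, y) \<Rightarrow> \<psi> x y)) = (\<lambda>(x, y). L (\<psi> x y))"
    by (simp add: fun_eq_iff split: prod.split)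
  finally show ?thesis .
qed

lemma lext_delta_image: "flinear L \<Longrightarrow> u \<in> free_space \<Longrightarrow> lext (\<lambda>a. L (delta a)) u = L u"
  by (rule flinear_eq_on_delta[OF flinear_lext]) simp_all

lemma lext_wedge_delta_delta:
  "lext \<phi> (wedge (delta i) (delta j)) = smul (inverse 2) (\<phi> (i, j) - (\<phi> (j, i) :: _ \<Rightarrow> 'f::field))"
  by (simp add: wedge_delta_delta lext_smul lext_diff)

lemma lext_vee_delta_delta:
  "lext \<phi> (vee (delta i) (delta j)) = smul (inverse 2) (\<phi> (i, j) + (\<phi> (j, i) :: _ \<Rightarrow> 'f::field))"
  by (simp add: vee_delta_delta lext_smul lext_add)

lemma lext_wedge_delta_delta_antisym:
  assumes "(2::'f::field) \<noteq> 0" and "\<phi> (j, i) = - (\<phi> (i, j) :: _ \<Rightarrow> 'f)"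
  shows "lext \<phi> (wedge (delta i) (delta j)) = \<phi> (i, j)"
  using assms by (simp add: lext_wedge_delta_delta fun_eq_iff fun_app_simps field_simps)


section \<open>Bilinear maps and tensors\<close>

lemma bilinear_lspan_into:
  assumes V: "vs.subspace V" and G: "G \<subseteq> free_space" and H: "H \<subseteq> free_space"
    and lin_left: "\<And>y. y \<in> free_space \<Longrightarrow> flinear (\<lambda>x. B x y)"
    and lin_right: "\<And>x. x \<in> free_space \<Longrightarrow> flinear (\<lambda>y. B x y)"
    and gen: "\<And>g h. g \<in> G \<Longrightarrow> h \<in> H \<Longrightarrow> B g h \<in> V"
    and x: "x \<in> lspan G" and y: "y \<in> lspan H"
  shows "B x y \<in> V"
proof -
  have x_free: "x \<in> free_space"
    using lspan_subset_free_space[OF G] x by auto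
  have "B x h \<in> V" if h: "h \<in> H" for h
  proof (rule flinear_lspan_into[OF lin_left G V _ x])
    show "h \<in> free_space" using h H by auto
    show "B g h \<in> V" if "g \<in> G" for g using that h by (rule gen)
  qed
  then show ?thesis
    by (rule flinear_lspan_into[OF lin_right[OF x_free] H V _ y])
qed

lemma bilinear_into_from_delta:
  assumes V: "vs.subspace V"
    and lin_left: "\<And>y. y \<in> free_space \<Longrightarrow> flinear (\<lambda>x. B x y)"
    and lin_right: "\<And>x. x \<in> free_space \<Longrightarrow> flinear (\<lambda>y. B x y)"
    and gen: "\<And>i j. B (delta i) (delta j) \<in> V"
    and x: "x \<in> free_space" and y: "y \<in> free_space"
  shows "B x y \<in> V"
proof (rule bilinear_lspan_into[OF V _ _ lin_left lin_right])
  show "x \<in> lspan (range delta)" "y \<in> lspan (range delta)"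
    using x y free_space_eq_lspan_delta by blast+
qed (use gen in auto)

lemma lext_ptens_delta_left:
  "v \<in> free_space \<Longrightarrow> lext \<phi> (ptens (delta a) v) = lext (\<lambda>z. \<phi> (a, z)) (v :: _ \<Rightarrow> 'f::field)"
  by (rule flinear_eq_on_delta[OF flinear_compose[OF flinear_lext flinear_ptens_right] flinear_lext])
     (auto simp: ptens_delta_delta)

lemma lext_ptens:
  assumes "u \<in> free_space" "v \<in> free_space"
  shows "lext \<phi> (ptens u v) = lext (\<lambda>a. lext (\<lambda>z. \<phi> (a, z)) v) (u :: _ \<Rightarrow> 'f::field)"
  by (rule flinear_eq_on_delta[OF flinear_compose[OF flinear_lext flinear_ptens_left] flinear_lext])
     (use assms in \<open>auto simp: lext_ptens_delta_left\<close>)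

lemma lext_ptens_delta_right:
  "u \<in> free_space \<Longrightarrow> lext \<phi> (ptens u (delta z)) = lext (\<lambda>a. \<phi> (a, z)) (u :: _ \<Rightarrow> 'f::field)"
  by (simp add: lext_ptens)

lemma lext_ptens_bilinear:
  assumes lin_left: "\<And>y. y \<in> free_space \<Longrightarrow> flinear (\<lambda>x. B x y)"
    and lin_right: "\<And>x. x \<in> free_space \<Longrightarrow> flinear (\<lambda>y. B x y)"
    and u: "u \<in> free_space" and v: "v \<in> free_space"
  shows "lext (\<lambda>(x, y). B (delta x) (delta y)) (ptens u v) = B u (v :: _ \<Rightarrow> 'f::field)"
proof -
  have "lext (\<lambda>(x, y). B (delta x) (delta y)) (ptens u v) = lext (\<lambda>a. lext (\<lambda>z. B (delta a) (delta z)) v) u"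
    by (simp add: lext_ptens[OF u v])
  also have "\<dots> = lext (\<lambda>a. B (delta a) v) u"
    by (simp add: lext_delta_image[OF lin_right v])
  also have "\<dots> = B u v"
    by (rule lext_delta_image[OF lin_left[OF v] u])
  finally show ?thesis .
qed

lemma lext_ptens_quadrilinear:
  fixes M :: "('a \<Rightarrow> 'f::field) \<Rightarrow> ('x \<Rightarrow> 'f) \<Rightarrow> ('a \<Rightarrow> 'f) \<Rightarrow> ('x \<Rightarrow> 'f) \<Rightarrow> ('z \<Rightarrow> 'f)"
  assumes lin1: "\<And>v u' v'. v \<in> free_space \<Longrightarrow> u' \<in> free_space \<Longrightarrow> v' \<in> free_space
      \<Longrightarrow> flinear (\<lambda>u. M u v u' v')"
    and lin2: "\<And>u u' v'. u \<in> free_space \<Longrightarrow> u' \<in> free_space \<Longrightarrow> v' \<in> free_space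
      \<Longrightarrow> flinear (\<lambda>v. M u v u' v')"
    and lin3: "\<And>u v v'. u \<in> free_space \<Longrightarrow> v \<in> free_space \<Longrightarrow> v' \<in> free_space
      \<Longrightarrow> flinear (\<lambda>u'. M u v u' v')"
    and lin4: "\<And>u v u'. u \<in> free_space \<Longrightarrow> v \<in> free_space \<Longrightarrow> u' \<in> free_space
      \<Longrightarrow> flinear (\<lambda>v'. M u v u' v')"
    and free: "u \<in> free_space" "v \<in> free_space" "u' \<in> free_space" "v' \<in> free_space"
  shows "lext (\<lambda>((a, x), (b, y)). M (delta a) (delta x) (delta b) (delta y))
      (ptens (ptens u v) (ptens u' v')) = M u v u' v'"
proof -
  let ?\<phi> = "\<lambda>((a, x), (b, y)). M (delta a) (delta x) (delta b) (delta y)"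
  have inner: "lext (\<lambda>j. ?\<phi> ((a, x), j)) (ptens u' v') = M (delta a) (delta x) u' v'" for a x
    using lext_ptens_bilinear[where B = "M (delta a) (delta x)", OF lin3 lin4 free(3,4)]
    by (simp add: case_prod_beta')
  have "lext ?\<phi> (ptens (ptens u v) (ptens u' v'))
      = lext (\<lambda>(a, x). lext (\<lambda>j. ?\<phi> ((a, x), j)) (ptens u' v')) (ptens u v)"
    by (simp add: lext_ptens free case_prod_beta')
  also have "\<dots> = lext (\<lambda>(a, x). M (delta a) (delta x) u' v') (ptens u v)"
    by (simp only: inner)
  also have "\<dots> = M u v u' v'"
    by (rule lext_ptens_bilinear[where B = "\<lambda>p q. M p q u' v'"]) (auto intro: lin1 lin2 free)
  finally show ?thesis .
qed


section \<open>Presentations by relations\<close>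

lemma lin_rel_subset_free_space: "lin_rel sc \<subseteq> (free_space :: ('v::ab_group_add \<Rightarrow> 'f::field) set)"
  unfolding lin_rel_def by auto

lemma tens_rel_subset_free_space:
  "R1 \<subseteq> free_space \<Longrightarrow> R2 \<subseteq> free_space \<Longrightarrow> tens_rel R1 R2 \<subseteq> (free_space :: (_ \<Rightarrow> 'f::field) set)"
  unfolding tens_rel_def by auto

lemma ptens_rel_left:
  fixes w :: "'j \<Rightarrow> 'f::field" and r :: "'i \<Rightarrow> 'f"
  assumes R1: "R1 \<subseteq> free_space" and r: "r \<in> lspan R1" and w: "w \<in> free_space"
  shows "ptens r w \<in> lspan (tens_rel R1 (R2 :: (_ \<Rightarrow> 'f) set))"
proof (rule bilinear_lspan_into[OF subspace_lspan R1 _ flinear_ptens_left flinear_ptens_right _ r])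
  show "w \<in> lspan (range delta)"
    using w free_space_eq_lspan_delta by blast
  show "ptens g h \<in> lspan (tens_rel R1 R2)" if "g \<in> R1" "h \<in> range delta" for g h
    using that by (intro lspan_superset) (auto simp: tens_rel_def)
qed auto

lemma ptens_rel_right:
  fixes w :: "'j \<Rightarrow> 'f::field" and r :: "'i \<Rightarrow> 'f"
  assumes R2: "R2 \<subseteq> free_space" and r: "r \<in> lspan R2" and w: "w \<in> free_space"
  shows "ptens w r \<in> lspan (tens_rel (R1 :: (_ \<Rightarrow> 'f) set) R2)"
proof (rule bilinear_lspan_into[OF subspace_lspan _ R2 flinear_ptens_left flinear_ptens_right _ _ r])
  show "w \<in> lspan (range delta)"
    using w free_space_eq_lspan_delta by blast
  show "ptens g h \<in> lspan (tens_rel R1 R2)" if "g \<in> range delta" "h \<in> R2" for g h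
    using that by (intro lspan_superset) (auto simp: tens_rel_def)
qed auto

lemma wedge_rel_left:
  "R \<subseteq> free_space \<Longrightarrow> r \<in> lspan R \<Longrightarrow> w \<in> free_space \<Longrightarrow> wedge r w \<in> lspan (tens_rel R R)"
  unfolding wedge_def by (intro lspan_smul lspan_diff ptens_rel_left ptens_rel_right) auto
lemma wedge_rel_right:
  "R \<subseteq> free_space \<Longrightarrow> r \<in> lspan R \<Longrightarrow> w \<in> free_space \<Longrightarrow> wedge w r \<in> lspan (tens_rel R R)"
  unfolding wedge_def by (intro lspan_smul lspan_diff ptens_rel_left ptens_rel_right) auto
lemma vee_rel_left:
  "R \<subseteq> free_space \<Longrightarrow> r \<in> lspan R \<Longrightarrow> w \<in> free_space \<Longrightarrow> vee r w \<in> lspan (tens_rel R R)"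
  unfolding vee_def by (intro lspan_smul lspan_add ptens_rel_left ptens_rel_right) auto
lemma vee_rel_right:
  "R \<subseteq> free_space \<Longrightarrow> r \<in> lspan R \<Longrightarrow> w \<in> free_space \<Longrightarrow> vee w r \<in> lspan (tens_rel R R)"
  unfolding vee_def by (intro lspan_smul lspan_add ptens_rel_left ptens_rel_right) auto

lemma lin_rel_add:
  "delta (a + b) - delta a - delta b \<in> lspan (lin_rel (sc :: 'f::field \<Rightarrow> 'v::ab_group_add \<Rightarrow> 'v))"
  by (rule lspan_superset) (auto simp: lin_rel_def)

lemma lin_rel_smul:
  "delta (sc c a) - smul c (delta a) \<in> lspan (lin_rel (sc :: 'f::field \<Rightarrow> 'v::ab_group_add \<Rightarrow> 'v))"
  by (rule lspan_superset) (auto simp: lin_rel_def)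

lemma lin_rel_0: "delta 0 \<in> lspan (lin_rel (sc :: 'f::field \<Rightarrow> 'v::ab_group_add \<Rightarrow> 'v))"
  using lspan_neg[OF lin_rel_add[of 0 0 sc]] by simp

lemma lin_rel_minus: "delta (- a) + delta a \<in> lspan (lin_rel (sc :: 'f::field \<Rightarrow> 'v::ab_group_add \<Rightarrow> 'v))"
  using lspan_diff[OF lin_rel_0 lin_rel_add[of "- a" a]] by (simp add: algebra_simps)

lemma lin_rel_sum:
  "finite F \<Longrightarrow> delta (\<Sum>b\<in>F. sc (k b) (v b)) - (\<Sum>b\<in>F. smul (k b) (delta (v b)))
     \<in> lspan (lin_rel (sc :: 'f::field \<Rightarrow> 'v::ab_group_add \<Rightarrow> 'v))"
proof (induction F rule: finite_induct)
  case empty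
  then show ?case using lin_rel_0 by simp
next
  case (insert x F)
  let ?S = "\<Sum>b\<in>F. sc (k b) (v b)" and ?T = "\<Sum>b\<in>F. smul (k b) (delta (v b))"
  have "delta (sc (k x) (v x) + ?S) - (smul (k x) (delta (v x)) + ?T)
      = (delta (sc (k x) (v x) + ?S) - delta (sc (k x) (v x)) - delta ?S)
        + (delta (sc (k x) (v x)) - smul (k x) (delta (v x))) + (delta ?S - ?T)"
    by (simp add: algebra_simps)
  also have "\<dots> \<in> lspan (lin_rel sc)"
    by (intro lspan_add lin_rel_add lin_rel_smul insert.IH)
  finally show ?case using insert.hyps by simp
qed

lemma lext_lin_rel_linear_map:
  fixes f :: "'v::ab_group_add \<Rightarrow> 'w::ab_group_add"
  assumes add: "\<And>a b. f (a + b) = f a + f b" and scale: "\<And>c a. f (sc c a) = sc' c (f a)"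
    and r: "r \<in> lspan (lin_rel (sc :: 'f::field \<Rightarrow> 'v \<Rightarrow> 'v))"
  shows "lext (\<lambda>a. delta (f a)) r \<in> lspan (lin_rel sc')"
proof (rule flinear_lspan_into[OF flinear_lext lin_rel_subset_free_space subspace_lspan _ r])
  fix s
  assume "s \<in> lin_rel sc"
  then consider a b where "s = delta (a + b) - delta a - delta b"
    | c a where "s = delta (sc c a) - smul c (delta a)"
    unfolding lin_rel_def by blast
  then show "lext (\<lambda>a. delta (f a)) s \<in> lspan (lin_rel sc')"
    by cases (simp_all add: lext_diff lext_smul add scale lin_rel_add lin_rel_smul)
qed

lemma lext_lin_rel_bilinear_left:
  fixes h :: "'a::ab_group_add \<Rightarrow> 'b \<Rightarrow> 'c::ab_group_add" and v :: "'b \<Rightarrow> 'f::field"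
  assumes add: "\<And>a a' b. h (a + a') b = h a b + h a' b"
    and scale: "\<And>c a b. h (s1 c a) b = s3 c (h a b)"
    and u: "u \<in> lspan (lin_rel (s1 :: 'f \<Rightarrow> 'a \<Rightarrow> 'a))" and v: "v \<in> free_space"
  shows "lext (\<lambda>(a, b). delta (h a b)) (ptens u v) \<in> lspan (lin_rel s3)"
proof (rule bilinear_lspan_into[OF subspace_lspan lin_rel_subset_free_space _ _ _ _ u,
      of "range (delta :: 'b \<Rightarrow> 'b \<Rightarrow> 'f)"])
  show "v \<in> lspan (range delta)"
    using v free_space_eq_lspan_delta by blast
  fix g :: "'a \<Rightarrow> 'f" and h' :: "'b \<Rightarrow> 'f"
  assume g: "g \<in> lin_rel s1" and "h' \<in> range delta"
  then obtain b where "h' = delta b" by blast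
  moreover have "g \<in> free_space"
    using g lin_rel_subset_free_space by blast
  ultimately have "lext (\<lambda>(a, b). delta (h a b)) (ptens g h') = lext (\<lambda>a. delta (h a b)) g"
    by (simp add: lext_ptens_delta_right)
  also have "\<dots> \<in> lspan (lin_rel s3)"
    by (rule lext_lin_rel_linear_map[where sc = s1, OF add scale lspan_superset[OF g]])
  finally show "lext (\<lambda>(a, b). delta (h a b)) (ptens g h') \<in> lspan (lin_rel s3)" .
qed (auto intro: flinear_compose[OF flinear_lext] flinear_ptens_left flinear_ptens_right)

lemma lext_lin_rel_bilinear_right:
  fixes h :: "'a \<Rightarrow> 'b::ab_group_add \<Rightarrow> 'c::ab_group_add" and u :: "'a \<Rightarrow> 'f::field"
  assumes add: "\<And>a b b'. h a (b + b') = h a b + h a b'"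
    and scale: "\<And>c a b. h a (s2 c b) = s3 c (h a b)"
    and u: "u \<in> free_space" and v: "v \<in> lspan (lin_rel (s2 :: 'f \<Rightarrow> 'b \<Rightarrow> 'b))"
  shows "lext (\<lambda>(a, b). delta (h a b)) (ptens u v) \<in> lspan (lin_rel s3)"
proof (rule bilinear_lspan_into[OF subspace_lspan _ lin_rel_subset_free_space _ _ _ _ v,
      of "range (delta :: 'a \<Rightarrow> 'a \<Rightarrow> 'f)"])
  show "u \<in> lspan (range delta)"
    using u free_space_eq_lspan_delta by blast
  fix g :: "'a \<Rightarrow> 'f" and h' :: "'b \<Rightarrow> 'f"
  assume "g \<in> range delta" and h': "h' \<in> lin_rel s2"
  then obtain a where "g = delta a" by blast
  moreover have "h' \<in> free_space"
    using h' lin_rel_subset_free_space by blast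
  ultimately have "lext (\<lambda>(a, b). delta (h a b)) (ptens g h') = lext (\<lambda>b. delta (h a b)) h'"
    by (simp add: lext_ptens_delta_left)
  also have "\<dots> \<in> lspan (lin_rel s3)"
    by (rule lext_lin_rel_linear_map[where sc = s2, OF add scale lspan_superset[OF h']])
  finally show "lext (\<lambda>(a, b). delta (h a b)) (ptens g h') \<in> lspan (lin_rel s3)" .
qed (auto intro: flinear_compose[OF flinear_lext] flinear_ptens_left flinear_ptens_right)


lemma lext_bilinear_tens_rel:
  assumes R: "R \<subseteq> free_space"
    and lin_left: "\<And>y. y \<in> free_space \<Longrightarrow> flinear (\<lambda>x. B x y)"
    and lin_right: "\<And>x. x \<in> free_space \<Longrightarrow> flinear (\<lambda>y. B x y)"
    and rel: "\<And>r w. r \<in> R \<Longrightarrow> w \<in> free_space \<Longrightarrow> B r w \<in> V \<and> B w r \<in> V"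
    and r: "r \<in> tens_rel R R"
  shows "lext (\<lambda>(x, y). B (delta x) (delta y)) r \<in> V"
proof -
  from r consider r' j where "r' \<in> R" "r = ptens r' (delta j)"
    | i r' where "r' \<in> R" "r = ptens (delta i) r'"
    unfolding tens_rel_def by blast
  then show ?thesis
  proof cases
    case 1
    with R have "lext (\<lambda>(x, y). B (delta x) (delta y)) r = B r' (delta j)"
      by (simp add: lext_ptens_bilinear[OF lin_left lin_right] subset_iff)
    with 1 show ?thesis using rel by simp
  next
    case 2
    with R have "lext (\<lambda>(x, y). B (delta x) (delta y)) r = B (delta i) r'"
      by (simp add: lext_ptens_bilinear[OF lin_left lin_right] subset_iff)
    with 2 show ?thesis using rel by simp
  qed
qed


section \<open>Exterior and symmetric squares\<close>

lemma subspace_Lam2: "vs.subspace (Lam2 R)"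
  unfolding Lam2_def by (rule subspace_lspan)

lemma subspace_Sym2: "vs.subspace (Sym2 R)"
  unfolding Sym2_def by (rule subspace_lspan)

lemma Lam2_subset_free_space: "R \<subseteq> free_space \<Longrightarrow> Lam2 R \<subseteq> (free_space :: (_ \<Rightarrow> 'f::field) set)"
  unfolding Lam2_def by (rule lspan_subset_free_space) (use tens_rel_subset_free_space[of R R] in auto)

lemma Sym2_subset_free_space: "R \<subseteq> free_space \<Longrightarrow> Sym2 R \<subseteq> (free_space :: (_ \<Rightarrow> 'f::field) set)"
  unfolding Sym2_def by (rule lspan_subset_free_space) (use tens_rel_subset_free_space[of R R] in auto)

lemma wedge_in_Lam2: "v \<in> free_space \<Longrightarrow> w \<in> free_space \<Longrightarrow> wedge v w \<in> Lam2 (R :: (_ \<Rightarrow> 'f::field) set)"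
  unfolding Lam2_def by (rule lspan_superset) blast

lemma vee_in_Sym2: "v \<in> free_space \<Longrightarrow> w \<in> free_space \<Longrightarrow> vee v w \<in> Sym2 (R :: (_ \<Rightarrow> 'f::field) set)"
  unfolding Sym2_def by (rule lspan_superset) blast

lemma flinear_Lam2_into:
  assumes R: "R \<subseteq> free_space" and f: "flinear f" and V: "vs.subspace V"
    and wedge: "\<And>i j. f (wedge (delta i) (delta j)) \<in> V"
    and rel: "\<And>r. r \<in> tens_rel R R \<Longrightarrow> f r \<in> V"
    and z: "z \<in> Lam2 R"
  shows "f z \<in> V"
proof (rule flinear_lspan_into[OF f _ V _ z[unfolded Lam2_def]])
  show "{wedge v w |v w. v \<in> free_space \<and> w \<in> free_space} \<union> tens_rel R R \<subseteq> free_space"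
    using tens_rel_subset_free_space[OF R R] by auto
  have "f (wedge v w) \<in> V" if "v \<in> free_space" "w \<in> free_space" for v w
    using that
    by (intro bilinear_into_from_delta[where B = "\<lambda>v w. f (wedge v w)", OF V _ _ wedge])
       (auto intro!: flinear_compose[OF f] flinear_wedge_left flinear_wedge_right)
  then show "f s \<in> V" if "s \<in> {wedge v w |v w. v \<in> free_space \<and> w \<in> free_space} \<union> tens_rel R R" for s
    using that rel by blast
qed

lemma flinear_Sym2_into:
  assumes R: "R \<subseteq> free_space" and f: "flinear f" and V: "vs.subspace V"
    and vee: "\<And>i j. f (vee (delta i) (delta j)) \<in> V"
    and rel: "\<And>r. r \<in> tens_rel R R \<Longrightarrow> f r \<in> V"
    and z: "z \<in> Sym2 R"
  shows "f z \<in> V"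
proof (rule flinear_lspan_into[OF f _ V _ z[unfolded Sym2_def]])
  show "{vee v w |v w. v \<in> free_space \<and> w \<in> free_space} \<union> tens_rel R R \<subseteq> free_space"
    using tens_rel_subset_free_space[OF R R] by auto
  have "f (vee v w) \<in> V" if "v \<in> free_space" "w \<in> free_space" for v w
    using that
    by (intro bilinear_into_from_delta[where B = "\<lambda>v w. f (vee v w)", OF V _ _ vee])
       (auto intro!: flinear_compose[OF f] flinear_vee_left flinear_vee_right)
  then show "f s \<in> V" if "s \<in> {vee v w |v w. v \<in> free_space \<and> w \<in> free_space} \<union> tens_rel R R" for s
    using that rel by blast
qed

definition sym_part :: "('i \<times> 'i \<Rightarrow> 'f::field) \<Rightarrow> ('i \<times> 'i \<Rightarrow> 'f)" where
  "sym_part = lext (\<lambda>(x, y). vee (delta x) (delta y))"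

definition alt_part :: "('i \<times> 'i \<Rightarrow> 'f::field) \<Rightarrow> ('i \<times> 'i \<Rightarrow> 'f)" where
  "alt_part = lext (\<lambda>(x, y). wedge (delta x) (delta y))"

lemma sym_part_tens_rel:
  "R \<subseteq> free_space \<Longrightarrow> r \<in> tens_rel R R \<Longrightarrow> sym_part r \<in> lspan (tens_rel R (R :: (_ \<Rightarrow> 'f::field) set))"
  unfolding sym_part_def
  by (rule lext_bilinear_tens_rel[OF _ flinear_vee_left flinear_vee_right])
     (auto intro: vee_rel_left vee_rel_right lspan_superset)

lemma alt_part_tens_rel:
  "R \<subseteq> free_space \<Longrightarrow> r \<in> tens_rel R R \<Longrightarrow> alt_part r \<in> lspan (tens_rel R (R :: (_ \<Rightarrow> 'f::field) set))"
  unfolding alt_part_def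
  by (rule lext_bilinear_tens_rel[OF _ flinear_wedge_left flinear_wedge_right])
     (auto intro: wedge_rel_left wedge_rel_right lspan_superset)

lemma sym_part_Lam2:
  assumes R: "R \<subseteq> free_space" and z: "z \<in> Lam2 R"
  shows "sym_part z \<in> lspan (tens_rel R (R :: (_ \<Rightarrow> 'f::field) set))"
proof (rule flinear_Lam2_into[OF R _ subspace_lspan _ _ z])
  show "flinear sym_part"
    unfolding sym_part_def by (rule flinear_lext)
  show "sym_part (wedge (delta i) (delta j)) \<in> lspan (tens_rel R R)" for i j
    by (simp add: sym_part_def lext_wedge_delta_delta vee_commute[of "delta j"] lspan_0)
qed (rule sym_part_tens_rel[OF R])

lemma Lam2_minus_alt_part_rel:
  assumes two: "(2::'f::field) \<noteq> 0" and R: "R \<subseteq> free_space" and z: "z \<in> Lam2 R"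
  shows "z - alt_part z \<in> lspan (tens_rel R (R :: (_ \<Rightarrow> 'f) set))"
proof (rule flinear_Lam2_into[OF R _ subspace_lspan _ _ z])
  show "flinear (\<lambda>z. z - alt_part z)"
    unfolding alt_part_def by (rule flinear_diff_fun[OF flinear_id flinear_lext])
  have "wedge (delta i) (delta j) - alt_part (wedge (delta i) (delta j)) = (0 :: _ \<Rightarrow> 'f)" for i j
    using two
    by (simp add: alt_part_def lext_wedge_delta_delta wedge_commute[of "delta j"] fun_eq_iff
        fun_app_simps field_simps)
  then show "wedge (delta i) (delta j) - alt_part (wedge (delta i) (delta j)) \<in> lspan (tens_rel R R)" for i j
    by (metis lspan_0)
  show "r - alt_part r \<in> lspan (tens_rel R R)" if "r \<in> tens_rel R R" for r
    using that by (intro lspan_diff lspan_superset alt_part_tens_rel[OF R])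
qed

lemma Sym2_minus_sym_part_rel:
  assumes two: "(2::'f::field) \<noteq> 0" and R: "R \<subseteq> free_space" and z: "z \<in> Sym2 R"
  shows "z - sym_part z \<in> lspan (tens_rel R (R :: (_ \<Rightarrow> 'f) set))"
proof (rule flinear_Sym2_into[OF R _ subspace_lspan _ _ z])
  show "flinear (\<lambda>z. z - sym_part z)"
    unfolding sym_part_def by (rule flinear_diff_fun[OF flinear_id flinear_lext])
  have "vee (delta i) (delta j) - sym_part (vee (delta i) (delta j)) = (0 :: _ \<Rightarrow> 'f)" for i j
    using two
    by (simp add: sym_part_def lext_vee_delta_delta vee_commute[of "delta j"] fun_eq_iff
        fun_app_simps field_simps)
  then show "vee (delta i) (delta j) - sym_part (vee (delta i) (delta j)) \<in> lspan (tens_rel R R)" for i j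
    by (metis lspan_0)
  show "r - sym_part r \<in> lspan (tens_rel R R)" if "r \<in> tens_rel R R" for r
    using that by (intro lspan_diff lspan_superset sym_part_tens_rel[OF R])
qed

lemma subspace_Z2: "R \<subseteq> free_space \<Longrightarrow> vs.subspace (Z2 R (brk :: _ \<Rightarrow> (_ \<Rightarrow> 'f::field)))"
  using Lam2_subset_free_space[of R]
  by (intro vs.subspaceI)
     (auto simp: Z2_def lext_0 lext_add lext_smul lspan_0 lspan_add lspan_smul subset_iff
       vs.subspace_0[OF subspace_Lam2] vs.subspace_add[OF subspace_Lam2] vs.subspace_scale[OF subspace_Lam2])

lemma Z2_subset_free_space: "R \<subseteq> free_space \<Longrightarrow> Z2 R brk \<subseteq> (free_space :: (_ \<Rightarrow> 'f::field) set)"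
  using Lam2_subset_free_space unfolding Z2_def by blast


section \<open>The current algebra \<open>A \<otimes> k\<close>\<close>

locale current_algebra = A: vector_space sA
  for sA :: "'f::field \<Rightarrow> 'a::ab_group_add \<Rightarrow> 'a" +
  fixes mA :: "'a \<Rightarrow> 'a \<Rightarrow> 'a" and oneA :: 'a
    and sK :: "'f \<Rightarrow> 'k::ab_group_add \<Rightarrow> 'k" and brK :: "'k \<Rightarrow> 'k \<Rightarrow> 'k"
  assumes two: "(2::'f) \<noteq> 0"
    and mult_add_left: "\<And>a b c. mA (a + b) c = mA a c + mA b c"
    and mult_add_right: "\<And>a b c. mA a (b + c) = mA a b + mA a c"
    and mult_scale_left: "\<And>r a b. mA (sA r a) b = sA r (mA a b)"
    and mult_scale_right: "\<And>r a b. mA a (sA r b) = sA r (mA a b)"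
    and mult_commute: "\<And>a b. mA a b = mA b a"
    and mult_one_left: "\<And>a. mA oneA a = a"
    and bracket_add_left: "\<And>x y z. brK (x + y) z = brK x z + brK y z"
    and bracket_add_right: "\<And>x y z. brK x (y + z) = brK x y + brK x z"
    and bracket_self: "\<And>x. brK x x = 0"
begin

abbreviation "RA \<equiv> (lin_rel sA :: ('a \<Rightarrow> 'f) set)"
abbreviation "RK \<equiv> (lin_rel sK :: ('k \<Rightarrow> 'f) set)"
abbreviation "Rg \<equiv> (g_rel sA sK :: ('a \<times> 'k \<Rightarrow> 'f) set)"
abbreviation "RAA \<equiv> tens_rel RA RA"
abbreviation "RKK \<equiv> tens_rel RK RK"
abbreviation "Null_AAkk \<equiv> lspan (tens_rel RAA RKK)"
abbreviation "Null_Akk \<equiv> lspan (tens_rel RA RKK)"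
abbreviation "brg \<equiv> (g_br mA brK :: _ \<Rightarrow> ('a \<times> 'k \<Rightarrow> 'f))"
abbreviation "brk \<equiv> ((\<lambda>(x, y). delta (brK x y)) :: _ \<Rightarrow> ('k \<Rightarrow> 'f))"
abbreviation "mult \<equiv> ((\<lambda>(a, b). delta (mA a b)) :: _ \<Rightarrow> ('a \<Rightarrow> 'f))"
abbreviation "P1 \<equiv> lext (p1 :: _ \<Rightarrow> (_ \<Rightarrow> 'f))"
abbreviation "P2 \<equiv> lext (p2 mA :: _ \<Rightarrow> (_ \<Rightarrow> 'f))"
abbreviation "P3 \<equiv> lext (p3 mA oneA :: _ \<Rightarrow> (_ \<Rightarrow> 'f))"
abbreviation "LamA_SymK \<equiv> lspan ({ptens u v | u v. u \<in> Lam2 RA \<and> v \<in> Sym2 RK} \<union> tens_rel RAA RKK)"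
abbreviation "A_ZK \<equiv> lspan ({ptens u z | u z. u \<in> free_space \<and> z \<in> Z2 RK brk} \<union> tens_rel RA RKK)"
abbreviation "IA_LamK \<equiv> lspan ({ptens i w | i w. i \<in> I_A sA mA \<and> w \<in> Lam2 RK} \<union> tens_rel RAA RKK)"

lemma powers_of_two_nonzero: "(4::'f) \<noteq> 0" "(8::'f) \<noteq> 0" "(16::'f) \<noteq> 0"
  using two mult_eq_0_iff[of "2::'f" 2] mult_eq_0_iff[of "2::'f" 4] mult_eq_0_iff[of "4::'f" 4] by simp_all

lemma RA_subset_free_space: "RA \<subseteq> free_space"
  by (rule lin_rel_subset_free_space)
lemma RK_subset_free_space: "RK \<subseteq> free_space"
  by (rule lin_rel_subset_free_space)
lemma RAA_subset_free_space: "RAA \<subseteq> free_space"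
  by (intro tens_rel_subset_free_space RA_subset_free_space)
lemma RKK_subset_free_space: "RKK \<subseteq> free_space"
  by (intro tens_rel_subset_free_space RK_subset_free_space)
lemma Rg_subset_free_space: "Rg \<subseteq> free_space"
  unfolding g_rel_def by (intro tens_rel_subset_free_space RA_subset_free_space RK_subset_free_space)

lemma bracket_antisym: "brK y x = - brK x y"
proof -
  have "brK (x + y) (x + y) = brK x x + brK y x + (brK x y + brK y y)"
    by (simp only: bracket_add_left bracket_add_right)
  then have "brK y x + brK x y = 0"
    by (simp add: bracket_self)
  then show ?thesis
    by (simp add: eq_neg_iff_add_eq_0)
qed

lemma bracket_antisym_rel: "delta (brK x y) + delta (brK y x) \<in> lspan RK"
  using lin_rel_minus[of "brK x y" sK] by (simp add: bracket_antisym[of y x] add.commute)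

definition mult_ext :: "('a \<Rightarrow> 'f) \<Rightarrow> ('a \<Rightarrow> 'f) \<Rightarrow> ('a \<Rightarrow> 'f)" where
  "mult_ext u u' = lext mult (ptens u u')"

lemma mult_ext_delta_delta: "mult_ext (delta a) (delta b) = delta (mA a b)"
  by (simp add: mult_ext_def ptens_delta_delta)

lemma free_space_mult_ext [simp]: "mult_ext u u' \<in> free_space"
  unfolding mult_ext_def by (rule free_space_lext) (auto split: prod.split)

lemma flinear_mult_ext_left: "u' \<in> free_space \<Longrightarrow> flinear (\<lambda>u. mult_ext u u')"
  unfolding mult_ext_def by (rule flinear_compose[OF flinear_lext flinear_ptens_left]) auto

lemma flinear_mult_ext_right: "u \<in> free_space \<Longrightarrow> flinear (\<lambda>u'. mult_ext u u')"
  unfolding mult_ext_def by (rule flinear_compose[OF flinear_lext flinear_ptens_right]) auto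

lemma mult_ext_rel_left: "u \<in> lspan RA \<Longrightarrow> u' \<in> free_space \<Longrightarrow> mult_ext u u' \<in> lspan RA"
  unfolding mult_ext_def
  by (rule lext_lin_rel_bilinear_left[where ?s1.0 = sA]) (auto simp: mult_add_left mult_scale_left)

lemma mult_ext_rel_right: "u \<in> free_space \<Longrightarrow> u' \<in> lspan RA \<Longrightarrow> mult_ext u u' \<in> lspan RA"
  unfolding mult_ext_def
  by (rule lext_lin_rel_bilinear_right[where ?s2.0 = sA]) (auto simp: mult_add_right mult_scale_right)


subsection \<open>The components \<open>p\<^sub>1\<close> and \<open>p\<^sub>3\<close>\<close>

lemma tens_rel_g_cases:
  assumes "e \<in> tens_rel Rg Rg"
  obtains u v u' v' where "e = ptens (ptens u v) (ptens u' v')"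
    and "u \<in> free_space" "v \<in> free_space" "u' \<in> free_space" "v' \<in> free_space"
    and "u \<in> lspan RA \<or> u' \<in> lspan RA \<or> v \<in> lspan RK \<or> v' \<in> lspan RK"
proof -
  have delta_pair: "(delta (p, q) :: _ \<Rightarrow> 'f) = ptens (delta p) (delta q)" for p q
    by (simp add: ptens_delta_delta)
  have RA: "r \<in> free_space \<and> r \<in> lspan RA" if "r \<in> RA" for r
    using that RA_subset_free_space lspan_superset by blast
  have RK: "r \<in> free_space \<and> r \<in> lspan RK" if "r \<in> RK" for r
    using that RK_subset_free_space lspan_superset by blast
  from assms consider r b y where "r \<in> Rg" "e = ptens r (ptens (delta b) (delta y))"
    | a x r where "r \<in> Rg" "e = ptens (ptens (delta a) (delta x)) r"
    unfolding tens_rel_def by (auto simp: delta_pair)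
  then show ?thesis
  proof cases
    case 1
    from \<open>r \<in> Rg\<close> consider r' x where "r' \<in> RA" "r = ptens r' (delta x)"
      | a r' where "r' \<in> RK" "r = ptens (delta a) r'"
      unfolding g_rel_def tens_rel_def by blast
    then show ?thesis
      by cases (use 1 RA RK that in simp_all)
  next
    case 2
    from \<open>r \<in> Rg\<close> consider r' y where "r' \<in> RA" "r = ptens r' (delta y)"
      | b r' where "r' \<in> RK" "r = ptens (delta b) r'"
      unfolding g_rel_def tens_rel_def by blast
    then show ?thesis
      by cases (use 2 RA RK that in simp_all)
  qed
qed

lemma P1_ptens_ptens:
  assumes "u \<in> free_space" "v \<in> free_space" "u' \<in> free_space" "v' \<in> free_space"
  shows "P1 (ptens (ptens u v) (ptens u' v')) = ptens (wedge u u') (vee v v')"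
  unfolding p1_def
  by (rule lext_ptens_quadrilinear[where M = "\<lambda>u v u' v'. ptens (wedge u u') (vee v v')"])
     (auto simp: assms intro!: flinear_compose[OF flinear_ptens_left]
       flinear_compose[OF flinear_ptens_right] flinear_wedge_left flinear_wedge_right flinear_vee_left flinear_vee_right)

lemma P3_ptens_ptens:
  assumes "u \<in> free_space" "v \<in> free_space" "u' \<in> free_space" "v' \<in> free_space"
  shows "P3 (ptens (ptens u v) (ptens u' v'))
    = ptens (vee u u' - vee (mult_ext u u') (delta oneA)) (wedge v v')"
proof -
  have p3: "p3 mA oneA = (\<lambda>((a, x), (b, y)). ptens (vee (delta a) (delta b)
      - vee (mult_ext (delta a) (delta b)) (delta oneA)) (wedge (delta x) (delta y)) :: _ \<Rightarrow> 'f)"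
    by (simp add: p3_def mult_ext_delta_delta)
  show ?thesis
    unfolding p3
    by (rule lext_ptens_quadrilinear[where M = "\<lambda>u v u' v'.
          ptens (vee u u' - vee (mult_ext u u') (delta oneA)) (wedge v v')"])
       (auto simp: assms intro!: flinear_compose[OF flinear_ptens_left]
         flinear_compose[OF flinear_ptens_right] flinear_wedge_left flinear_wedge_right flinear_diff_fun flinear_vee_left flinear_vee_right
         flinear_compose[OF flinear_vee_left flinear_mult_ext_left]
         flinear_compose[OF flinear_vee_left flinear_mult_ext_right])
qed

lemma P1_tens_rel: "e \<in> tens_rel Rg Rg \<Longrightarrow> P1 e \<in> Null_AAkk"
proof (elim tens_rel_g_cases)
  fix u v u' v'
  assume e: "e = ptens (ptens u v) (ptens u' v')"
    and free: "u \<in> free_space" "v \<in> free_space" "u' \<in> free_space" "v' \<in> free_space"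
    and "u \<in> lspan RA \<or> u' \<in> lspan RA \<or> v \<in> lspan RK \<or> v' \<in> lspan RK"
  then consider "wedge u u' \<in> lspan RAA" | "vee v v' \<in> lspan RKK"
    using wedge_rel_left[OF RA_subset_free_space] wedge_rel_right[OF RA_subset_free_space]
      vee_rel_left[OF RK_subset_free_space] vee_rel_right[OF RK_subset_free_space]
    by auto
  then show "P1 e \<in> Null_AAkk"
    unfolding e P1_ptens_ptens[OF free]
    by cases
       (simp_all add: free ptens_rel_left[OF RAA_subset_free_space] ptens_rel_right[OF RKK_subset_free_space])
qed

lemma P3_tens_rel: "e \<in> tens_rel Rg Rg \<Longrightarrow> P3 e \<in> Null_AAkk"
proof (elim tens_rel_g_cases)
  fix u v u' v'
  assume e: "e = ptens (ptens u v) (ptens u' v')"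
    and free: "u \<in> free_space" "v \<in> free_space" "u' \<in> free_space" "v' \<in> free_space"
    and "u \<in> lspan RA \<or> u' \<in> lspan RA \<or> v \<in> lspan RK \<or> v' \<in> lspan RK"
  then consider "vee u u' \<in> lspan RAA" "mult_ext u u' \<in> lspan RA" | "wedge v v' \<in> lspan RKK"
    using vee_rel_left[OF RA_subset_free_space] vee_rel_right[OF RA_subset_free_space]
      wedge_rel_left[OF RK_subset_free_space] wedge_rel_right[OF RK_subset_free_space]
      mult_ext_rel_left mult_ext_rel_right
    by auto
  then show "P3 e \<in> Null_AAkk"
    unfolding e P3_ptens_ptens[OF free]
    by cases
       (simp_all add: free ptens_rel_left[OF RAA_subset_free_space] ptens_rel_right[OF RKK_subset_free_space]
         lspan_diff vee_rel_left[OF RA_subset_free_space])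
qed


lemma p1_swap: "(p1 (j, i) :: _ \<Rightarrow> 'f) = - p1 (i, j)"
proof -
  obtain a x b y where "i = (a, x)" "j = (b, y)"
    by (cases i, cases j)
  then show ?thesis
    by (simp add: p1_def wedge_commute[of "delta b"] vee_commute[of "delta y"] fun_eq_iff fun_app_simps)
qed

lemma p2_swap: "(p2 mA (j, i) :: _ \<Rightarrow> 'f) = - p2 mA (i, j)"
proof -
  obtain a x b y where "i = (a, x)" "j = (b, y)"
    by (cases i, cases j)
  then show ?thesis
    by (simp add: p2_def wedge_commute[of "delta y"] mult_commute[of b] ptens_minus_right)
qed

lemma p3_swap: "(p3 mA oneA (j, i) :: _ \<Rightarrow> 'f) = - p3 mA oneA (i, j)"
proof -
  obtain a x b y where "i = (a, x)" "j = (b, y)"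
    by (cases i, cases j)
  then show ?thesis
    by (simp add: p3_def wedge_commute[of "delta y"] vee_commute[of "delta b"] mult_commute[of b]
        ptens_minus_right)
qed

lemma P1_wedge: "P1 (wedge (delta i) (delta j)) = p1 (i, j)"
  by (rule lext_wedge_delta_delta_antisym[OF two]) (rule p1_swap)
lemma P2_wedge: "P2 (wedge (delta i) (delta j)) = p2 mA (i, j)"
  by (rule lext_wedge_delta_delta_antisym[OF two]) (rule p2_swap)
lemma P3_wedge: "P3 (wedge (delta i) (delta j)) = p3 mA oneA (i, j)"
  by (rule lext_wedge_delta_delta_antisym[OF two]) (rule p3_swap)

lemma P1_Lam2:
  assumes "t \<in> Lam2 Rg"
  shows "P1 t \<in> LamA_SymK"
proof (rule flinear_Lam2_into[OF Rg_subset_free_space flinear_lext subspace_lspan _ _ assms])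
  fix i j :: "'a \<times> 'k"
  have "wedge (delta (fst i)) (delta (fst j)) \<in> Lam2 RA" "vee (delta (snd i)) (delta (snd j)) \<in> Sym2 RK"
    by (simp_all add: wedge_in_Lam2 vee_in_Sym2)
  then show "P1 (wedge (delta i) (delta j)) \<in> LamA_SymK"
    unfolding P1_wedge by (cases i, cases j) (auto simp: p1_def intro: lspan_superset)
next
  show "P1 r \<in> LamA_SymK" if "r \<in> tens_rel Rg Rg" for r
    using P1_tens_rel[OF that] lspan_mono[of "tens_rel RAA RKK"] by blast
qed

lemma vee_minus_mult_in_I_A: "vee (delta a) (delta b) - vee (delta (mA a b)) (delta oneA) \<in> I_A sA mA"
proof -
  have "vee (delta a) (delta b) - vee (delta (mA a b)) (delta oneA) \<in> Sym2 RA"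
    by (intro vs.subspace_diff[OF subspace_Sym2] vee_in_Sym2) auto
  moreover have "lext mult (vee (delta a) (delta b) - vee (delta (mA a b)) (delta oneA)) = 0"
    by (simp add: lext_diff lext_vee_delta_delta mult_commute[of _ oneA] mult_one_left mult_commute[of b])
  ultimately show ?thesis
    unfolding I_A_def by (simp add: lspan_0)
qed

lemma P3_Lam2:
  assumes "t \<in> Lam2 Rg"
  shows "P3 t \<in> IA_LamK"
proof (rule flinear_Lam2_into[OF Rg_subset_free_space flinear_lext subspace_lspan _ _ assms])
  fix i j :: "'a \<times> 'k"
  obtain a x b y where ij: "i = (a, x)" "j = (b, y)"
    by (cases i, cases j)
  have "p3 mA oneA (i, j) \<in> {ptens i w |i w. i \<in> I_A sA mA \<and> w \<in> Lam2 RK}"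
    using vee_minus_mult_in_I_A wedge_in_Lam2[of "delta x" "delta y"] by (simp add: ij p3_def) blast
  then show "P3 (wedge (delta i) (delta j)) \<in> IA_LamK"
    unfolding P3_wedge by (intro lspan_superset UnI1)
next
  show "P3 r \<in> IA_LamK" if "r \<in> tens_rel Rg Rg" for r
    using P3_tens_rel[OF that] lspan_mono[of "tens_rel RAA RKK"] by blast
qed


subsection \<open>The component \<open>p\<^sub>2\<close>\<close>

definition coef :: "'a \<Rightarrow> 'a \<Rightarrow> 'f" where
  "coef a b = A.representation (A.extend_basis {}) a b"

lemma basis_A: "A.independent (A.extend_basis {})" "A.span (A.extend_basis {}) = UNIV"
  using A.independent_extend_basis[OF A.independent_empty] A.span_extend_basis[OF A.independent_empty]
  by simp_all

lemma coef_finite: "finite {b. coef a b \<noteq> 0}"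
  unfolding coef_def by (rule A.finite_representation)

lemma coef_add: "coef (x + y) b = coef x b + coef y b"
  using A.representation_add[OF basis_A(1), of y x] basis_A(2) by (simp add: coef_def)

lemma coef_scale: "coef (sA r x) b = r * coef x b"
  using A.representation_scale[OF basis_A(1), of x r] basis_A(2) by (simp add: coef_def)

lemma sum_coef:
  assumes "finite F" "{b. coef a b \<noteq> 0} \<subseteq> F"
  shows "(\<Sum>b\<in>F. sA (coef a b) b) = a"
proof -
  have "(\<Sum>b\<in>F. sA (coef a b) b) = (\<Sum>b\<in>{b. coef a b \<noteq> 0}. sA (coef a b) b)"
    by (rule sum.mono_neutral_right) (use assms in auto)
  also have "\<dots> = a"
    unfolding coef_def
    by (rule A.sum_nonzero_representation_eq) (simp_all add: basis_A)
  finally show ?thesis .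
qed

lemma delta_eq_sum_coef:
  "finite F \<Longrightarrow> {b. coef a b \<noteq> 0} \<subseteq> F \<Longrightarrow> delta a - (\<Sum>b\<in>F. smul (coef a b) (delta b)) \<in> lspan RA"
  using lin_rel_sum[of F sA "coef a" "\<lambda>b. b"] by (simp add: sum_coef)

definition coord :: "'a \<Rightarrow> ('a \<times> 'z \<Rightarrow> 'f) \<Rightarrow> ('z \<Rightarrow> 'f)" where
  "coord b = lext (\<lambda>(a, z). smul (coef a b) (delta z))"

lemma flinear_coord: "flinear (coord b)"
  unfolding coord_def by (rule flinear_lext)

lemma free_space_coord [simp]: "coord b u \<in> free_space"
  unfolding coord_def by (rule free_space_lext) (auto split: prod.split)

lemma coord_ptens_delta: "w \<in> free_space \<Longrightarrow> coord b (ptens (delta a) w) = smul (coef a b) w"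
  by (simp add: coord_def lext_ptens_delta_left lext_delta_image[OF flinear_smul_const])

lemma coord_delta: "coord b (delta (a, z)) = smul (coef a b) (delta z)"
  using coord_ptens_delta[of "delta z" b a] by (simp add: ptens_delta_delta)

lemma coord_rel:
  assumes R: "R \<subseteq> free_space" and u: "u \<in> lspan (tens_rel RA R)"
  shows "coord b u \<in> lspan R"
proof (rule flinear_lspan_into[OF flinear_coord tens_rel_subset_free_space[OF RA_subset_free_space R]
      subspace_lspan _ u])
  fix s
  assume "s \<in> tens_rel RA R"
  then consider r z where "r \<in> RA" "s = ptens r (delta z)" | a r where "r \<in> R" "s = ptens (delta a) r"
    unfolding tens_rel_def by blast
  then show "coord b s \<in> lspan R"
  proof cases
    case 1
    with RA_subset_free_space have "coord b s = lext (\<lambda>a. smul (coef a b) (delta z)) r"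
      by (auto simp: coord_def lext_ptens_delta_right)
    also from \<open>r \<in> RA\<close> have "\<dots> = 0"
      by (auto simp: lin_rel_def lext_diff lext_smul coef_add coef_scale vs.scale_left_distrib)
    finally show ?thesis
      by (simp add: lspan_0)
  next
    case 2
    with R have "r \<in> free_space" by blast
    with 2 show ?thesis
      by (simp add: coord_ptens_delta lspan_smul lspan_superset)
  qed
qed

lemma sum_coord_rel:
  assumes u: "u \<in> free_space" and F: "finite F"
    and supp: "\<And>a z. u (a, z) \<noteq> 0 \<Longrightarrow> {b. coef a b \<noteq> 0} \<subseteq> F"
  shows "u - (\<Sum>b\<in>F. ptens (delta b) (coord b u)) \<in> lspan (tens_rel RA R)"
proof -
  let ?D = "\<lambda>u :: 'a \<times> 'z \<Rightarrow> 'f. u - (\<Sum>b\<in>F. ptens (delta b) (coord b u))"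
  have "?D u = lext (\<lambda>k. ?D (delta k)) u"
    by (rule lext_delta_image[symmetric, OF _ u])
       (intro flinear_diff_fun flinear_id flinear_sum_fun
          flinear_compose[OF flinear_ptens_right flinear_coord], simp)
  also have "\<dots> \<in> lspan (tens_rel RA R)"
  proof (rule lext_in_subspace[OF subspace_lspan])
    fix k
    assume k: "u k \<noteq> 0"
    obtain a z where kk: "k = (a, z)" by (cases k)
    have "?D (delta k) = ptens (delta a - (\<Sum>b\<in>F. smul (coef a b) (delta b))) (delta z)"
      by (simp add: kk coord_delta ptens_delta_delta ptens_smul_left ptens_smul_right ptens_diff_left
          ptens_sum_left)
    also have "\<dots> \<in> lspan (tens_rel RA R)"
      by (rule ptens_rel_left[OF RA_subset_free_space delta_eq_sum_coef[OF F supp]]) (use k kk in auto)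
    finally show "?D (delta k) \<in> lspan (tens_rel RA R)" .
  qed
  finally show ?thesis .
qed


lemma free_space_p2 [simp]: "p2 mA i \<in> (free_space :: (_ \<Rightarrow> 'f) set)"
  by (cases i) (auto simp: p2_def)

lemma free_space_brg [simp]: "brg i \<in> free_space"
  by (cases i) (auto simp: g_br_def)

lemma coord_P2: "coord b (P2 t) = lext (\<lambda>i. coord b (p2 mA i)) t"
  by (rule lext_compose_flinear[OF flinear_coord free_space_p2])

lemma coord_p2: "coord b (p2 mA ((a, x), (a', y))) = smul (coef (mA a a') b) (wedge (delta x) (delta y))"
  by (simp add: p2_def coord_ptens_delta)

lemma coord_P2_Lam2: "coord b (P2 t) \<in> Lam2 RK"
  unfolding coord_P2
proof (rule lext_in_subspace[OF subspace_Lam2])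
  fix i :: "('a \<times> 'k) \<times> ('a \<times> 'k)"
  obtain a x a' y where "i = ((a, x), (a', y))"
    by (cases i) auto
  then show "coord b (p2 mA i) \<in> Lam2 RK"
    by (simp add: coord_p2 vs.subspace_scale[OF subspace_Lam2] wedge_in_Lam2)
qed

text \<open>Taking coordinates intertwines the bracket of \<open>g\<close> with that of \<open>k\<close>, up to the
  relation \<open>[x, y] + [y, x] = 0\<close>.\<close>

lemma coord_brg_rel: "coord b (brg i) - lext brk (coord b (p2 mA i)) \<in> lspan RK"
proof -
  obtain a x a' y where i: "i = ((a, x), (a', y))"
    by (cases i) auto
  let ?c = "coef (mA a a') b"
  have "coord b (brg i) = smul ?c (delta (brK x y))"
    by (simp add: i g_br_def coord_ptens_delta)
  moreover have "lext brk (coord b (p2 mA i))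
      = smul ?c (smul (inverse 2) (delta (brK x y) - delta (brK y x)))"
    by (simp add: i coord_p2 lext_smul lext_wedge_delta_delta)
  ultimately have "coord b (brg i) - lext brk (coord b (p2 mA i))
      = smul ?c (smul (inverse 2) (delta (brK x y) + delta (brK y x)))"
    using two by (simp add: fun_eq_iff fun_app_simps field_simps)
  also have "\<dots> \<in> lspan RK"
    by (intro lspan_smul bracket_antisym_rel)
  finally show ?thesis .
qed

lemma coord_P2_Z2:
  assumes "lext brg t \<in> lspan Rg"
  shows "coord b (P2 t) \<in> Z2 RK brk"
proof -
  have "lext brk (coord b (P2 t)) = lext (\<lambda>i. lext brk (coord b (p2 mA i))) t"
    unfolding coord_P2 by (rule lext_compose_flinear[OF flinear_lext free_space_coord])
  also have "\<dots> = coord b (lext brg t) - lext (\<lambda>i. coord b (brg i) - lext brk (coord b (p2 mA i))) t"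
    by (simp add: lext_diff_fun lext_compose_flinear[OF flinear_coord])
  also have "\<dots> \<in> lspan RK"
  proof (rule lspan_diff)
    show "coord b (lext brg t) \<in> lspan RK"
      using assms unfolding g_rel_def by (rule coord_rel[OF RK_subset_free_space])
    show "lext (\<lambda>i. coord b (brg i) - lext brk (coord b (p2 mA i))) t \<in> lspan RK"
      by (rule lext_in_subspace[OF subspace_lspan coord_brg_rel])
  qed
  finally show ?thesis
    using coord_P2_Lam2 by (simp add: Z2_def)
qed

lemma P2_Z2:
  assumes "lext brg t \<in> lspan Rg"
  shows "P2 t \<in> A_ZK"
proof -
  define s where "s = P2 t"
  have s_free: "s \<in> free_space"
    unfolding s_def by (rule free_space_lext) simp
  define F where "F = (\<Union>k\<in>{k. s k \<noteq> 0}. {b. coef (fst k) b \<noteq> 0})"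
  have F: "finite F"
    unfolding F_def using s_free by (intro finite_UN_I) (auto simp: free_space_iff coef_finite)
  have supp: "{b. coef a b \<noteq> 0} \<subseteq> F" if "s (a, z) \<noteq> 0" for a z
    using that unfolding F_def by (intro subsetI UN_I[of "(a, z)"]) auto
  have "s - (\<Sum>b\<in>F. ptens (delta b) (coord b s)) \<in> Null_Akk"
    by (rule sum_coord_rel[OF s_free F supp])
  then have "s - (\<Sum>b\<in>F. ptens (delta b) (coord b s)) \<in> A_ZK"
    using lspan_mono[of "tens_rel RA RKK"] by blast
  moreover have "(\<Sum>b\<in>F. ptens (delta b) (coord b s)) \<in> A_ZK"
  proof (intro lspan_sum lspan_superset UnI1 CollectI exI conjI)
    show "coord b s \<in> Z2 RK brk" for b
      unfolding s_def by (rule coord_P2_Z2[OF assms])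
  qed (rule refl free_space_delta)+
  ultimately have "(s - (\<Sum>b\<in>F. ptens (delta b) (coord b s))) + (\<Sum>b\<in>F. ptens (delta b) (coord b s)) \<in> A_ZK"
    by (rule lspan_add)
  then show ?thesis
    by (simp add: s_def)
qed


subsection \<open>Preimages of the generators\<close>

definition in_P_image :: "(('a \<times> 'a) \<times> ('k \<times> 'k) \<Rightarrow> 'f) \<Rightarrow> ('a \<times> ('k \<times> 'k) \<Rightarrow> 'f)
    \<Rightarrow> (('a \<times> 'a) \<times> ('k \<times> 'k) \<Rightarrow> 'f) \<Rightarrow> bool" where
  "in_P_image c1 c2 c3 \<longleftrightarrow>
     (\<exists>t\<in>Z2 Rg brg. c1 - P1 t \<in> Null_AAkk \<and> c2 - P2 t \<in> Null_Akk \<and> c3 - P3 t \<in> Null_AAkk)"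

lemma subspace_Z2_g: "vs.subspace (Z2 Rg brg)"
  by (rule subspace_Z2[OF Rg_subset_free_space])

lemma Z2_g_subset_free_space: "Z2 Rg brg \<subseteq> free_space"
  by (rule Z2_subset_free_space[OF Rg_subset_free_space])

lemma in_P_imageI:
  "t \<in> Z2 Rg brg \<Longrightarrow> c1 - P1 t \<in> Null_AAkk \<Longrightarrow> c2 - P2 t \<in> Null_Akk \<Longrightarrow> c3 - P3 t \<in> Null_AAkk
    \<Longrightarrow> in_P_image c1 c2 c3"
  unfolding in_P_image_def by blast

lemma in_P_image_add:
  assumes "in_P_image a1 a2 a3" "in_P_image b1 b2 b3"
  shows "in_P_image (a1 + b1) (a2 + b2) (a3 + b3)"
proof -
  from assms obtain t t' where t: "t \<in> Z2 Rg brg" "a1 - P1 t \<in> Null_AAkk" "a2 - P2 t \<in> Null_Akk"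
      "a3 - P3 t \<in> Null_AAkk"
    and t': "t' \<in> Z2 Rg brg" "b1 - P1 t' \<in> Null_AAkk" "b2 - P2 t' \<in> Null_Akk" "b3 - P3 t' \<in> Null_AAkk"
    unfolding in_P_image_def by blast
  have free: "t \<in> free_space" "t' \<in> free_space"
    using t(1) t'(1) Z2_g_subset_free_space by auto
  have split: "(a + b) - (x + y) = (a - x) + (b - y)" for a b x y :: "_ \<Rightarrow> 'f"
    by (simp add: algebra_simps)
  show ?thesis
    by (rule in_P_imageI[of "t + t'"])
       (simp_all add: lext_add free split lspan_add t t' vs.subspace_add[OF subspace_Z2_g])
qed

lemma in_P_image_smul:
  assumes "in_P_image c1 c2 c3"
  shows "in_P_image (smul r c1) (smul r c2) (smul r c3)"
proof -
  from assms obtain t where t: "t \<in> Z2 Rg brg" "c1 - P1 t \<in> Null_AAkk" "c2 - P2 t \<in> Null_Akk"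
      "c3 - P3 t \<in> Null_AAkk"
    unfolding in_P_image_def by blast
  have "t \<in> free_space"
    using t(1) Z2_g_subset_free_space by auto
  then show ?thesis
    by (intro in_P_imageI[of "smul r t"])
       (simp_all add: lext_smul vs.scale_right_diff_distrib[symmetric] lspan_smul t
         vs.subspace_scale[OF subspace_Z2_g])
qed

lemma in_P_image_rel: "r1 \<in> Null_AAkk \<Longrightarrow> r2 \<in> Null_Akk \<Longrightarrow> r3 \<in> Null_AAkk \<Longrightarrow> in_P_image r1 r2 r3"
  by (rule in_P_imageI[of 0]) (simp_all add: lext_0 vs.subspace_0[OF subspace_Z2_g])

lemma subspace_in_P_image:
  shows subspace_in_P_image_1: "vs.subspace {c. in_P_image c 0 0}"
    and subspace_in_P_image_2: "vs.subspace {c. in_P_image 0 c 0}"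
    and subspace_in_P_image_3: "vs.subspace {c. in_P_image 0 0 c}"
  using in_P_image_add[of _ 0 0 _ 0 0] in_P_image_add[of 0 _ 0 0 _ 0] in_P_image_add[of 0 0 _ 0 0]
    in_P_image_smul[of _ 0 0] in_P_image_smul[of 0 _ 0] in_P_image_smul[of 0 0]
    in_P_image_rel[OF lspan_0 lspan_0 lspan_0]
  by (auto intro!: vs.subspaceI)

text \<open>The preimage \<open>(ax \<and> by + ay \<and> bx) / 2\<close> is a cycle because \<open>A\<close> is commutative, and
  it is symmetric in \<open>x, y\<close>, so that \<open>p\<^sub>2\<close> and \<open>p\<^sub>3\<close> vanish on it.\<close>

lemma in_P_image_wedge_vee: "in_P_image (ptens (wedge (delta a) (delta b)) (vee (delta x) (delta y))) 0 0"
proof -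
  define w1 :: "('a \<times> 'k) \<times> ('a \<times> 'k) \<Rightarrow> 'f" where "w1 = wedge (delta (a, x)) (delta (b, y))"
  define w2 :: "('a \<times> 'k) \<times> ('a \<times> 'k) \<Rightarrow> 'f" where "w2 = wedge (delta (a, y)) (delta (b, x))"
  define t where "t = smul (inverse 2) (w1 + w2)"
  have lext_t: "lext \<phi> t = smul (inverse 2) (lext \<phi> w1 + lext \<phi> w2)" for \<phi> :: "_ \<Rightarrow> (_ \<Rightarrow> 'f)"
    by (simp add: t_def w1_def w2_def lext_smul lext_add)
  have "t \<in> Lam2 Rg"
    unfolding t_def w1_def w2_def
    by (intro vs.subspace_scale[OF subspace_Lam2] vs.subspace_add[OF subspace_Lam2] wedge_in_Lam2) auto
  moreover have "lext brg t = 0"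
    by (simp add: lext_t w1_def w2_def lext_wedge_delta_delta g_br_def mult_commute[of b a] fun_eq_iff
        fun_app_simps algebra_simps)
  ultimately have "t \<in> Z2 Rg brg"
    by (simp add: Z2_def lspan_0)
  let ?X = "ptens (wedge (delta a) (delta b)) (vee (delta x) (delta y)) :: _ \<Rightarrow> 'f"
  have "P1 t = smul (inverse 2) (?X + ?X)"
    unfolding lext_t w1_def w2_def P1_wedge by (simp add: p1_def vee_commute[of "delta y"])
  also have "\<dots> = ?X"
    using two by (simp add: fun_eq_iff fun_app_simps field_simps)
  finally have "P1 t = ?X" .
  moreover have "P2 t = 0"
    unfolding lext_t w1_def w2_def P2_wedge
    by (simp add: p2_def wedge_commute[of "delta y"] ptens_minus_right)
  moreover have "P3 t = 0"
    unfolding lext_t w1_def w2_def P3_wedge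
    by (simp add: p3_def wedge_commute[of "delta y"] ptens_minus_right)
  ultimately show ?thesis
    using \<open>t \<in> Z2 Rg brg\<close> by (intro in_P_imageI[of t]) (simp_all add: lspan_0)
qed


lemma mult_one_right: "mA a oneA = a"
  by (simp add: mult_commute[of a] mult_one_left)

lemma Z2_antisym_bracket_rel:
  assumes "z \<in> Z2 RK brk"
  shows "lext (\<lambda>(x, y). smul (inverse 2) (delta (brK x y) - delta (brK y x))) z \<in> lspan RK"
proof -
  let ?B = "\<lambda>(x, y). smul (inverse 2) (delta (brK x y) - delta (brK y x)) :: 'k \<Rightarrow> 'f"
  have diff_rel: "brk i - ?B i \<in> lspan RK" for i
  proof -
    obtain x y where i: "i = (x, y)"
      by (cases i)
    have "brk i - ?B i = smul (inverse 2) (delta (brK x y) + delta (brK y x))"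
      using two powers_of_two_nonzero by (simp add: i fun_eq_iff fun_app_simps field_simps)
    also have "\<dots> \<in> lspan RK"
      by (intro lspan_smul bracket_antisym_rel)
    finally show ?thesis .
  qed
  have "lext brk z \<in> lspan RK"
    using assms by (simp add: Z2_def)
  then have "lext brk z - lext (\<lambda>i. brk i - ?B i) z \<in> lspan RK"
    by (rule lspan_diff[OF _ lext_in_subspace[OF subspace_lspan diff_rel]])
  then show ?thesis
    by (simp add: lext_diff_fun)
qed

definition cycle_lift :: "'a \<Rightarrow> ('k \<times> 'k \<Rightarrow> 'f) \<Rightarrow> (('a \<times> 'k) \<times> ('a \<times> 'k) \<Rightarrow> 'f)" where
  "cycle_lift a = lext (\<lambda>(x, y). wedge (delta (a, x)) (delta (oneA, y)))"

lemma lext_cycle_lift: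
  "lext \<phi> (cycle_lift a z) = lext (\<lambda>(x, y). lext \<phi> (wedge (delta (a, x)) (delta (oneA, y)))) z"
  unfolding cycle_lift_def by (rule lext_case_prod_compose_flinear[OF flinear_lext]) simp

lemma cycle_lift_Lam2: "cycle_lift a z \<in> Lam2 Rg"
  unfolding cycle_lift_def
  by (rule lext_in_subspace[OF subspace_Lam2]) (auto intro: wedge_in_Lam2 split: prod.split)

lemma brg_cycle_lift:
  "lext brg (cycle_lift a z)
    = ptens (delta a) (lext (\<lambda>(x, y). smul (inverse 2) (delta (brK x y) - delta (brK y x))) z)"
  by (simp add: lext_cycle_lift lext_wedge_delta_delta g_br_def mult_one_right mult_one_left
      ptens_smul_right ptens_diff_right lext_case_prod_compose_flinear[OF flinear_ptens_right])

lemma P1_cycle_lift: "P1 (cycle_lift a z) = ptens (wedge (delta a) (delta oneA)) (sym_part z)"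
  by (simp only: lext_cycle_lift P1_wedge)
     (simp add: p1_def sym_part_def lext_case_prod_compose_flinear[OF flinear_ptens_right])

lemma P2_cycle_lift: "P2 (cycle_lift a z) = ptens (delta a) (alt_part z)"
  by (simp only: lext_cycle_lift P2_wedge)
     (simp add: p2_def alt_part_def mult_one_right lext_case_prod_compose_flinear[OF flinear_ptens_right])

lemma P3_cycle_lift: "P3 (cycle_lift a z) = 0"
  by (simp only: lext_cycle_lift P3_wedge) (simp add: p3_def mult_one_right lext_def split_def)

lemma in_P_image_cycle:
  assumes z: "z \<in> Z2 RK brk"
  shows "in_P_image 0 (ptens (delta a) z) 0"
proof (rule in_P_imageI[of "cycle_lift a z"])
  have "lext brg (cycle_lift a z) \<in> lspan Rg"
    unfolding brg_cycle_lift g_rel_def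
    by (rule ptens_rel_right[OF RK_subset_free_space Z2_antisym_bracket_rel[OF z]]) simp
  then show "cycle_lift a z \<in> Z2 Rg brg"
    by (simp add: Z2_def cycle_lift_Lam2)
  have z_Lam2: "z \<in> Lam2 RK"
    using z by (simp add: Z2_def)
  show "0 - P1 (cycle_lift a z) \<in> Null_AAkk"
    unfolding P1_cycle_lift
    by (intro lspan_diff lspan_0 ptens_rel_right[OF RKK_subset_free_space]
        sym_part_Lam2[OF RK_subset_free_space z_Lam2]) simp
  have "ptens (delta a) z - P2 (cycle_lift a z) = ptens (delta a) (z - alt_part z)"
    by (simp add: P2_cycle_lift ptens_diff_right)
  also have "\<dots> \<in> Null_Akk"
    by (intro ptens_rel_right[OF RKK_subset_free_space] Lam2_minus_alt_part_rel[OF two RK_subset_free_space z_Lam2])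
       simp
  finally show "ptens (delta a) z - P2 (cycle_lift a z) \<in> Null_Akk" .
  show "0 - P3 (cycle_lift a z) \<in> Null_AAkk"
    by (simp add: P3_cycle_lift lspan_0)
qed


definition I_A_lift :: "'k \<Rightarrow> 'k \<Rightarrow> ('a \<times> 'a \<Rightarrow> 'f) \<Rightarrow> (('a \<times> 'k) \<times> ('a \<times> 'k) \<Rightarrow> 'f)" where
  "I_A_lift x y = lext (\<lambda>(a, b).
     smul (inverse 2) (wedge (delta (a, x)) (delta (b, y)) - wedge (delta (a, y)) (delta (b, x))))"

lemma lext_I_A_lift:
  "lext \<phi> (I_A_lift x y i) = lext (\<lambda>(a, b). smul (inverse 2)
     (lext \<phi> (wedge (delta (a, x)) (delta (b, y))) - lext \<phi> (wedge (delta (a, y)) (delta (b, x))))) i"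
  unfolding I_A_lift_def by (simp add: lext_case_prod_compose_flinear[OF flinear_lext] lext_smul lext_diff)

lemma I_A_lift_Lam2: "I_A_lift x y i \<in> Lam2 Rg"
  unfolding I_A_lift_def
  by (rule lext_in_subspace[OF subspace_Lam2])
     (auto intro!: wedge_in_Lam2 vs.subspace_scale[OF subspace_Lam2] vs.subspace_diff[OF subspace_Lam2]
       split: prod.split)

lemma brg_I_A_lift:
  "lext brg (I_A_lift x y i) = ptens (lext mult i) (smul (inverse 2) (delta (brK x y) - delta (brK y x)))"
proof -
  have "smul (inverse 2) (lext brg (wedge (delta (a, x)) (delta (b, y)))
        - lext brg (wedge (delta (a, y)) (delta (b, x))))
      = ptens (delta (mA a b)) (smul (inverse 2) (delta (brK x y) - delta (brK y x)))" for a b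
    using two powers_of_two_nonzero
    by (simp add: lext_wedge_delta_delta g_br_def mult_commute[of b a] fun_eq_iff fun_app_simps field_simps)
  then show ?thesis
    by (simp add: lext_I_A_lift lext_case_prod_compose_flinear[OF flinear_ptens_left])
qed

lemma P1_I_A_lift: "P1 (I_A_lift x y i) = 0"
  by (simp only: lext_I_A_lift P1_wedge)
     (simp add: p1_def vee_commute[of "delta y"] lext_def split_def)

lemma P2_I_A_lift: "P2 (I_A_lift x y i) = ptens (lext mult i) (wedge (delta x) (delta y))"
proof -
  have "smul (inverse 2) (p2 mA ((a, x), (b, y)) - p2 mA ((a, y), (b, x)))
      = (ptens (delta (mA a b)) (wedge (delta x) (delta y)) :: _ \<Rightarrow> 'f)" for a b
    using two by (simp add: p2_def wedge_commute[of "delta y"] fun_eq_iff fun_app_simps field_simps)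
  then show ?thesis
    by (simp only: lext_I_A_lift P2_wedge)
       (simp add: lext_case_prod_compose_flinear[OF flinear_ptens_left])
qed

lemma P3_I_A_lift:
  "P3 (I_A_lift x y i) = ptens (sym_part i - vee (lext mult i) (delta oneA)) (wedge (delta x) (delta y))"
proof -
  let ?v = "\<lambda>(a, b). vee (delta a) (delta b) - vee (delta (mA a b)) (delta oneA) :: 'a \<times> 'a \<Rightarrow> 'f"
  have "smul (inverse 2) (p3 mA oneA ((a, x), (b, y)) - p3 mA oneA ((a, y), (b, x)))
      = ptens (?v (a, b)) (wedge (delta x) (delta y))" for a b
    using two by (simp add: p3_def wedge_commute[of "delta y"] fun_eq_iff fun_app_simps field_simps)
  then have "P3 (I_A_lift x y i) = lext (\<lambda>(a, b). ptens (?v (a, b)) (wedge (delta x) (delta y))) i"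
    by (simp only: lext_I_A_lift P3_wedge)
  also have "(\<lambda>(a, b). ptens (?v (a, b)) (wedge (delta x) (delta y)))
      = (\<lambda>k. ptens (?v k) (wedge (delta x) (delta y)))"
    by (simp add: fun_eq_iff)
  also have "lext \<dots> i = ptens (lext ?v i) (wedge (delta x) (delta y))"
    by (rule lext_compose_flinear[OF flinear_ptens_left, symmetric]) (simp split: prod.split)
  also have "?v = (\<lambda>k. (\<lambda>(a, b). vee (delta a) (delta b)) k - vee (mult k) (delta oneA))"
    by (auto simp: fun_eq_iff)
  also have "lext \<dots> i = sym_part i - vee (lext mult i) (delta oneA)"
    by (simp add: lext_diff_fun sym_part_def lext_compose_flinear[OF flinear_vee_left] split_def)
  finally show ?thesis .
qed

lemma in_P_image_I_A:
  assumes i: "i \<in> I_A sA mA"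
  shows "in_P_image 0 0 (ptens i (wedge (delta x) (delta y)))"
proof (rule in_P_imageI[of "I_A_lift x y i"])
  have i_Sym2: "i \<in> Sym2 RA" and mult_i: "lext mult i \<in> lspan RA"
    using i unfolding I_A_def by auto
  have "lext brg (I_A_lift x y i) \<in> lspan Rg"
    unfolding brg_I_A_lift g_rel_def by (rule ptens_rel_left[OF RA_subset_free_space mult_i]) simp
  then show "I_A_lift x y i \<in> Z2 Rg brg"
    by (simp add: Z2_def I_A_lift_Lam2)
  show "0 - P1 (I_A_lift x y i) \<in> Null_AAkk"
    by (simp add: P1_I_A_lift lspan_0)
  show "0 - P2 (I_A_lift x y i) \<in> Null_Akk"
    unfolding P2_I_A_lift by (intro lspan_diff lspan_0 ptens_rel_left[OF RA_subset_free_space mult_i]) simp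
  have "ptens i (wedge (delta x) (delta y)) - P3 (I_A_lift x y i)
      = ptens ((i - sym_part i) + vee (lext mult i) (delta oneA)) (wedge (delta x) (delta y))"
    by (simp add: P3_I_A_lift ptens_diff_left[symmetric] ptens_add_left[symmetric] algebra_simps)
  also have "\<dots> \<in> Null_AAkk"
    by (intro ptens_rel_left[OF RAA_subset_free_space] lspan_add
        Sym2_minus_sym_part_rel[OF two RA_subset_free_space i_Sym2] vee_rel_left[OF RA_subset_free_space mult_i]) simp_all
  finally show "ptens i (wedge (delta x) (delta y)) - P3 (I_A_lift x y i) \<in> Null_AAkk" .
qed


lemma in_P_image_LamA_SymK:
  assumes "c \<in> LamA_SymK"
  shows "in_P_image c 0 0"
proof -
  have "in_P_image (ptens u v) 0 0" if u: "u \<in> Lam2 RA" and v: "v \<in> Sym2 RK" for u v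
  proof -
    have v_free: "v \<in> free_space"
      using v Sym2_subset_free_space[OF RK_subset_free_space] by blast
    have "ptens (wedge (delta a) (delta b)) v \<in> {c. in_P_image c 0 0}" for a b
    proof (rule flinear_Sym2_into[OF RK_subset_free_space flinear_ptens_right subspace_in_P_image_1 _ _ v])
      show "ptens (wedge (delta a) (delta b)) (vee (delta x) (delta y)) \<in> {c. in_P_image c 0 0}" for x y
        by (simp add: in_P_image_wedge_vee)
      show "ptens (wedge (delta a) (delta b)) r \<in> {c. in_P_image c 0 0}" if "r \<in> RKK" for r
        using that
        by (simp add: in_P_image_rel lspan_0 ptens_rel_right[OF RKK_subset_free_space lspan_superset])
    qed
    moreover have "ptens r v \<in> {c. in_P_image c 0 0}" if "r \<in> RAA" for r
      using that v_free
      by (simp add: in_P_image_rel lspan_0 ptens_rel_left[OF RAA_subset_free_space lspan_superset])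
    ultimately have "ptens u v \<in> {c. in_P_image c 0 0}"
      by (intro flinear_Lam2_into[OF RA_subset_free_space flinear_ptens_left subspace_in_P_image_1 _ _ u])
    then show ?thesis
      by simp
  qed
  then have "LamA_SymK \<subseteq> {c. in_P_image c 0 0}"
    by (intro lspan_minimal[OF _ subspace_in_P_image_1])
       (auto intro: in_P_image_rel lspan_superset lspan_0)
  with assms show ?thesis
    by blast
qed

lemma in_P_image_A_ZK:
  assumes "c \<in> A_ZK"
  shows "in_P_image 0 c 0"
proof -
  have "in_P_image 0 (ptens u z) 0" if u: "u \<in> free_space" and z: "z \<in> Z2 RK brk" for u z
  proof -
    have "ptens u z \<in> {c. in_P_image 0 c 0}"
      using u unfolding free_space_eq_lspan_delta
      by (rule flinear_lspan_into[OF flinear_ptens_left _ subspace_in_P_image_2, rotated 2])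
         (auto simp: in_P_image_cycle[OF z])
    then show ?thesis
      by simp
  qed
  then have "A_ZK \<subseteq> {c. in_P_image 0 c 0}"
    by (intro lspan_minimal[OF _ subspace_in_P_image_2])
       (auto intro: in_P_image_rel lspan_superset lspan_0)
  with assms show ?thesis
    by blast
qed

lemma in_P_image_IA_LamK:
  assumes "c \<in> IA_LamK"
  shows "in_P_image 0 0 c"
proof -
  have "in_P_image 0 0 (ptens i w)" if i: "i \<in> I_A sA mA" and w: "w \<in> Lam2 RK" for i w
  proof -
    have i_free: "i \<in> free_space"
      using i Sym2_subset_free_space[OF RA_subset_free_space] unfolding I_A_def by blast
    have "ptens i w \<in> {c. in_P_image 0 0 c}"
    proof (rule flinear_Lam2_into[OF RK_subset_free_space flinear_ptens_right subspace_in_P_image_3 _ _ w])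
      show "ptens i (wedge (delta x) (delta y)) \<in> {c. in_P_image 0 0 c}" for x y
        by (simp add: in_P_image_I_A[OF i])
      show "ptens i r \<in> {c. in_P_image 0 0 c}" if "r \<in> RKK" for r
        using that i_free
        by (simp add: in_P_image_rel lspan_0 ptens_rel_right[OF RKK_subset_free_space lspan_superset])
    qed
    then show ?thesis
      by simp
  qed
  then have "IA_LamK \<subseteq> {c. in_P_image 0 0 c}"
    by (intro lspan_minimal[OF _ subspace_in_P_image_3])
       (auto intro: in_P_image_rel lspan_superset lspan_0)
  with assms show ?thesis
    by blast
qed

theorem P_image_Z2:
  "{(c1, c2, c3). \<exists>t \<in> Z2 Rg brg. c1 - P1 t \<in> Null_AAkk \<and> c2 - P2 t \<in> Null_Akk \<and> c3 - P3 t \<in> Null_AAkk}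
    = LamA_SymK \<times> A_ZK \<times> IA_LamK" (is "?image = _")
proof (intro equalityI subsetI)
  fix c
  assume "c \<in> ?image"
  then obtain c1 c2 c3 t where c: "c = (c1, c2, c3)" and t: "t \<in> Lam2 Rg" "lext brg t \<in> lspan Rg"
    and rel: "c1 - P1 t \<in> Null_AAkk" "c2 - P2 t \<in> Null_Akk" "c3 - P3 t \<in> Null_AAkk"
    by (auto simp: Z2_def)
  have "(c1 - P1 t) + P1 t \<in> LamA_SymK"
    using rel(1) lspan_mono[of "tens_rel RAA RKK"] by (blast intro: lspan_add P1_Lam2[OF t(1)])
  moreover have "(c2 - P2 t) + P2 t \<in> A_ZK"
    using rel(2) lspan_mono[of "tens_rel RA RKK"] by (blast intro: lspan_add P2_Z2[OF t(2)])
  moreover have "(c3 - P3 t) + P3 t \<in> IA_LamK"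
    using rel(3) lspan_mono[of "tens_rel RAA RKK"] by (blast intro: lspan_add P3_Lam2[OF t(1)])
  ultimately show "c \<in> LamA_SymK \<times> A_ZK \<times> IA_LamK"
    by (simp add: c)
next
  fix c
  assume "c \<in> LamA_SymK \<times> A_ZK \<times> IA_LamK"
  then obtain c1 c2 c3 where c: "c = (c1, c2, c3)" "c1 \<in> LamA_SymK" "c2 \<in> A_ZK" "c3 \<in> IA_LamK"
    by auto
  have "in_P_image (c1 + 0 + 0) (0 + c2 + 0) (0 + 0 + c3)"
    by (intro in_P_image_add in_P_image_LamA_SymK in_P_image_A_ZK in_P_image_IA_LamK c)
  then show "c \<in> ?image"
    by (simp add: c(1) in_P_image_def)
qed

end

theorem lemma2p1:
  fixes sA :: "'f::field \<Rightarrow> 'a::ab_group_add \<Rightarrow> 'a"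
    and mA :: "'a \<Rightarrow> 'a \<Rightarrow> 'a" and oneA :: 'a
    and sK :: "'f \<Rightarrow> 'k::ab_group_add \<Rightarrow> 'k"
    and brK :: "'k \<Rightarrow> 'k \<Rightarrow> 'k"
  assumes two: "(2::'f) \<noteq> 0"
    and vsA: "vector_space sA"
    and mA_add1: "\<And>a b c. mA (a + b) c = mA a c + mA b c"
    and mA_add2: "\<And>a b c. mA a (b + c) = mA a b + mA a c"
    and mA_scale1: "\<And>r a b. mA (sA r a) b = sA r (mA a b)"
    and mA_scale2: "\<And>r a b. mA a (sA r b) = sA r (mA a b)"
    and mA_assoc: "\<And>a b c. mA (mA a b) c = mA a (mA b c)"
    and mA_comm: "\<And>a b. mA a b = mA b a"
    and mA_unit: "\<And>a. mA oneA a = a"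
    and vsK: "vector_space sK"
    and br_add1: "\<And>x y z. brK (x + y) z = brK x z + brK y z"
    and br_add2: "\<And>x y z. brK x (y + z) = brK x y + brK x z"
    and br_scale1: "\<And>r x y. brK (sK r x) y = sK r (brK x y)"
    and br_scale2: "\<And>r x y. brK x (sK r y) = sK r (brK x y)"
    and br_alt: "\<And>x. brK x x = 0"
    and br_jacobi: "\<And>x y z. brK x (brK y z) + brK y (brK z x) + brK z (brK x y) = 0"
  shows
    "{(c1, c2, c3). \<exists>t \<in> Z2 (g_rel sA sK) (g_br mA brK).
        c1 - lext p1 t \<in> lspan (tens_rel (tens_rel (lin_rel sA) (lin_rel sA))
                                          (tens_rel (lin_rel sK) (lin_rel sK)))
      \<and> c2 - lext (p2 mA) t \<in> lspan (tens_rel (lin_rel sA) (tens_rel (lin_rel sK) (lin_rel sK)))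
      \<and> c3 - lext (p3 mA oneA) t \<in> lspan (tens_rel (tens_rel (lin_rel sA) (lin_rel sA))
                                          (tens_rel (lin_rel sK) (lin_rel sK)))}
     = lspan ({ptens u v | u v. u \<in> Lam2 (lin_rel sA) \<and> v \<in> Sym2 (lin_rel sK)}
              \<union> tens_rel (tens_rel (lin_rel sA) (lin_rel sA)) (tens_rel (lin_rel sK) (lin_rel sK)))
     \<times> lspan ({ptens u z | u z. u \<in> free_space \<and> z \<in> Z2 (lin_rel sK) (\<lambda>(x, y). delta (brK x y))}
              \<union> tens_rel (lin_rel sA) (tens_rel (lin_rel sK) (lin_rel sK)))
     \<times> lspan ({ptens i w | i w. i \<in> I_A sA mA \<and> w \<in> Lam2 (lin_rel sK)}
              \<union> tens_rel (tens_rel (lin_rel sA) (lin_rel sA)) (tens_rel (lin_rel sK) (lin_rel sK)))"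
proof -
  interpret current_algebra sA mA oneA sK brK
    by (intro current_algebra.intro current_algebra_axioms.intro vsA) (fact assms)+
  show ?thesis
    by (rule P_image_Z2)
qed

end
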